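(* Assume in addition that $R(A_3)$ is closed. Let $f\in R(A_2^* )$, $g\in R(A_1^* )$, $k\in K_2$, let $x\in\tilde D_2:=\{\xi\in D(A_2)\cap D(A_1^* ):A_2\xi\in D(A_2^* )\}$ be the unique solution of $A_2^*A_2x=f$, $A_1^*x=g$, $\pi_2x=k$, put $y:=A_2x$, and let $(\tilde x,\tilde y)\in H_2\times H_3$. Set $e:=x-\tilde x$, $h:=y-\tilde y$, $e_{A_1}:=\pi_{A_1}e$, $e_{A_2^*}:=\pi_{A_2^*}e$, $e_{K_2}:=\pi_2e$, $h_{A_2}:=\pi_{A_2}h$, $h_{A_3^*}:=\pi_{A_3^*}h$, $h_{K_3}:=\pi_3h$. Then: (i) $e=e_{A_1}+e_{K_2}+e_{A_2^*}\in R(A_1)\oplus K_2\oplus R(A_2^* )$, $h=h_{A_2}+h_{K_3}+h_{A_3^*}\in R(A_2)\oplus K_3\oplus R(A_3^* )$, with $\|e\|^2_{H_2}=\|e_{A_1}\|^2+\|e_{K_2}\|^2+\|e_{A_2^*}\|^2$ and $\|h\|^2_{H_3}=\|h_{A_2}\|^2+\|h_{K_3}\|^2+\|h_{A_3^*}\|^2$; (ii) $e_{A_1}=x_g-\pi_{A_1}\tilde x$ and $\|e_{A_1}\|^2_{H_2}=\min_{\zeta\in D(A_1^* )}\big(c_1\|A_1^*\zeta-g\|_{H_1}+\|\zeta-\tilde x\|_{H_2}\big)^2=\max_{\varphi\in D(A_1)}\big(2\langle g,\varphi\rangle_{H_1}-\langle2\tilde x+A_1\varphi,A_1\varphi\rangle_{H_2}\big)$,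 attained at $\hat\zeta:=e_{A_1}+\tilde x\in D(A_1^* )$ (with $A_1^*\hat\zeta=g$) resp. $\hat\varphi:=(\mathcal{A}_1)^{-1}e_{A_1}$; (iii) $e_{A_2^*}=\pi_{A_2^*}x-\pi_{A_2^*}\tilde x$ and $$\|e_{A_2^*}\|^2_{H_2}=\min_{\xi\in D(A_2)}\min_{\zeta\in D(A_2^* )}\big(c_2^2\|A_2^*\zeta-f\|_{H_2}+c_2\|\zeta-A_2\xi\|_{H_3}+\|\xi-\tilde x\|_{H_2}\big)^2=\min_{\xi\in D(A_2^*A_2)}\big(c_2^2\|A_2^*A_2\xi-f\|_{H_2}+\|\xi-\tilde x\|_{H_2}\big)^2$$ $$=\max_{\phi\in D(A_2^*A_2)}\big(2\langle f,\phi\rangle_{H_2}-\langle2\tilde x+A_2^*A_2\phi,A_2^*A_2\phi\rangle_{H_2}\big),$$ where the minima are attained at $\hat\xi:=e_{A_2^*}+\tilde x\in D(A_2^*A_2)$ (with $A_2\hat\xi=y$, $A_2^*A_2\hat\xi=f$) together with $\hat\zeta:=y\in D(A_2^* )$ (with $A_2^*\hat\zeta=f$), and the maximum at $\hat\phi:=(\mathcal{A}_2)^{-1}(\mathcal{A}_2^* )^{-1}e_{A_2^*}$; (iv) $e_{K_2}=k-\pi_2\tilde x$ and $\|e_{K_2}\|^2_{H_2}=\min_{\varphi\in D(A_1)}\min_{\phi\in D(A_2^* )}\|k-\tilde x+A_1\varphi+A_2^*\phi\|^2_{H_2}=\max_{\theta\in K_2}\langle2(k-\tilde x)-\theta,\theta\rangle_{H_2}$,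 attained at $\hat\varphi:=(\mathcal{A}_1)^{-1}\pi_{A_1}\tilde x$, $\hat\phi:=(\mathcal{A}_2^* )^{-1}\pi_{A_2^*}\tilde x$ (with $A_1\hat\varphi+A_2^*\hat\phi=(1-\pi_2)\tilde x$) resp. $\hat\theta:=e_{K_2}$; (v) $h_{A_2}=y-\pi_{A_2}\tilde y$ and $\|h_{A_2}\|^2_{H_3}=\min_{\zeta\in D(A_2^* )}\big(c_2\|A_2^*\zeta-f\|_{H_2}+\|\zeta-\tilde y\|_{H_3}\big)^2=\max_{\varphi\in D(A_2)}\big(2\langle f,\varphi\rangle_{H_2}-\langle2\tilde y+A_2\varphi,A_2\varphi\rangle_{H_3}\big)$, attained at $\hat\zeta:=h_{A_2}+\tilde y\in D(A_2^* )$ (with $A_2^*\hat\zeta=f$) resp. $\hat\varphi:=(\mathcal{A}_2)^{-1}h_{A_2}$; (vi) $h_{A_3^*}=-\pi_{A_3^*}\tilde y$ and $\|h_{A_3^*}\|^2_{H_3}=\min_{\xi\in D(A_3)}\big(c_3\|A_3\xi\|_{H_4}+\|\xi-\tilde y\|_{H_3}\big)^2=\min_{\xi\in N(A_3)}\|\xi-\tilde y\|^2_{H_3}=\max_{\phi\in D(A_3^* )}\big(-\langle2\tilde y+A_3^*\phi,A_3^*\phi\rangle_{H_3}\big)$, attained at $\hat\xi:=h_{A_3^*}+\tilde y\in N(A_3)$ resp. $\hat\phi:=(\mathcal{A}_3^* )^{-1}h_{A_3^*}$; (vii) $h_{K_3}=-\pi_3\tilde y$ and $\|h_{K_3}\|^2_{H_3}=\min_{\varphi\in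 D(A_2)}\min_{\phi\in D(A_3^* )}\|-\tilde y+A_2\varphi+A_3^*\phi\|^2_{H_3}=\max_{\theta\in K_3}\big(-\langle2\tilde y+\theta,\theta\rangle_{H_3}\big)$, attained at $\hat\varphi:=(\mathcal{A}_2)^{-1}\pi_{A_2}\tilde y$, $\hat\phi:=(\mathcal{A}_3^* )^{-1}\pi_{A_3^*}\tilde y$ (with $A_2\hat\varphi+A_3^*\hat\phi=(1-\pi_3)\tilde y$) resp. $\hat\theta:=h_{K_3}$. If $\tilde x=k+\tilde x_\perp$ with $\tilde x_\perp\in K_2^\perp$, then $e_{K_2}=0$ and in (ii), (iii) $\tilde x$ can be replaced by $\tilde x_\perp$. If $\tilde y\in K_3^\perp$, then $h_{K_3}=0$ (and in (v), (vi) $\tilde y$ may be replaced by its $K_3^\perp$ component, i.e. by itself).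
   Context: Let $H_0,\dots,H_4$ be Hilbert spaces and, for $\ell=0,\dots,3$, $A_\ell:D(A_\ell)\subset H_\ell\to H_{\ell+1}$ densely defined closed linear operators with Hilbert space adjoints $A_\ell^*$, satisfying $R(A_\ell)\subset N(A_{\ell+1})$ for $\ell=0,1,2$. Standing assumption: $R(A_1)$, $R(A_2)$ closed and $K_2$ finite dimensional. $K_\ell:=N(A_\ell)\cap N(A_{\ell-1}^* )$, $\pi_\ell:H_\ell\to K_\ell$ orthogonal projectors ($\ell=2,3$); $\pi_{A_1},\pi_{A_2^*}$ orthogonal projectors of $H_2$ onto $R(A_1),R(A_2^* )$; $\pi_{A_2},\pi_{A_3^*}$ orthogonal projectors of $H_3$ onto $R(A_2),R(A_3^* )$. Reduced operators $\mathcal{A}_\ell:=A_\ell|_{D(A_\ell)\cap R(A_\ell^* )}$, $\mathcal{A}_\ell^*:=A_\ell^*|_{D(A_\ell^* )\cap R(A_\ell)}$ (injective). $x_g:=(\mathcal{A}_1^* )^{-1}g$. $c_\ell\in(0,\infty)$ is the best constant with $\|x\|_{H_\ell}\le c_\ell\|A_\ell x\|_{H_{\ell+1}}$ for all $x\in D(\mathcal{A}_\ell)$, $\ell=1,2,3$. $D(A_2^*A_2):=\{\xi\in D(A_2):A_2\xi\in D(A_2^* )\}$ and $D(\mathcal{A}_2^*\mathcal{A}_2)$ analogously. *)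

theory Defs
  imports "HOL-Analysis.Analysis"
begin

text \<open>Real Hilbert spaces are types of sort real_inner + complete_space.
  A (possibly unbounded) operator A : D(A) \<subseteq> H \<rightarrow> H' is a pair (D, A) of
  a domain set D and a function A; values of A outside D are irrelevant.\<close>

definition lin_on :: "'a::real_vector set \<Rightarrow> ('a \<Rightarrow> 'b::real_vector) \<Rightarrow> bool" where
  "lin_on D A \<longleftrightarrow> subspace D \<and>
     (\<forall>x\<in>D. \<forall>y\<in>D. A (x + y) = A x + A y) \<and> (\<forall>c. \<forall>x\<in>D. A (c *\<^sub>R x) = c *\<^sub>R A x)"

definition closed_dd_op :: "'a::real_inner set \<Rightarrow> ('a \<Rightarrow> 'b::real_inner) \<Rightarrow> bool" where
  "closed_dd_op D A \<longleftrightarrow> lin_on D A \<and> closure D = UNIV \<and> closed {(x, A x) | x. x \<in> D}"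

definition adj_dom :: "'a::real_inner set \<Rightarrow> ('a \<Rightarrow> 'b::real_inner) \<Rightarrow> 'b set" where
  "adj_dom D A = {y. \<exists>z. \<forall>x\<in>D. inner (A x) y = inner x z}"

definition adj :: "'a::real_inner set \<Rightarrow> ('a \<Rightarrow> 'b::real_inner) \<Rightarrow> 'b \<Rightarrow> 'a" where
  "adj D A y = (THE z. \<forall>x\<in>D. inner (A x) y = inner x z)"

definition ker_op :: "'a set \<Rightarrow> ('a \<Rightarrow> 'b::zero) \<Rightarrow> 'a set" where
  "ker_op D A = {x \<in> D. A x = 0}"

definition ran_op :: "'a set \<Rightarrow> ('a \<Rightarrow> 'b) \<Rightarrow> 'b set" where
  "ran_op D A = A ` D"

definition oproj :: "'a::real_inner set \<Rightarrow> 'a \<Rightarrow> 'a" where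
  "oproj S x = (THE p. p \<in> S \<and> (\<forall>s\<in>S. inner (x - p) s = 0))"

text \<open>reduced operator \<A> = A restricted to D(A) \<inter> R(A*), and its inverse\<close>
definition red_dom :: "'a::real_inner set \<Rightarrow> ('a \<Rightarrow> 'b::real_inner) \<Rightarrow> 'a set" where
  "red_dom D A = D \<inter> ran_op (adj_dom D A) (adj D A)"

definition red_inv :: "'a::real_inner set \<Rightarrow> ('a \<Rightarrow> 'b::real_inner) \<Rightarrow> 'b \<Rightarrow> 'a" where
  "red_inv D A y = (THE x. x \<in> red_dom D A \<and> A x = y)"

text \<open>reduced adjoint \<A>* = A* restricted to D(A*) \<inter> R(A), and its inverse\<close>
definition red_adj_dom :: "'a::real_inner set \<Rightarrow> ('a \<Rightarrow> 'b::real_inner) \<Rightarrow> 'b set" where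
  "red_adj_dom D A = adj_dom D A \<inter> ran_op D A"

definition red_adj_inv :: "'a::real_inner set \<Rightarrow> ('a \<Rightarrow> 'b::real_inner) \<Rightarrow> 'a \<Rightarrow> 'b" where
  "red_adj_inv D A x = (THE y. y \<in> red_adj_dom D A \<and> adj D A y = x)"

definition best_const :: "'a::real_inner set \<Rightarrow> ('a \<Rightarrow> 'b::real_inner) \<Rightarrow> real" where
  "best_const D A = Inf {c. 0 \<le> c \<and> (\<forall>x \<in> red_dom D A. norm x \<le> c * norm (A x))}"

definition finite_dim_set :: "'a::real_vector set \<Rightarrow> bool" where
  "finite_dim_set S \<longleftrightarrow> (\<exists>B. finite B \<and> S \<subseteq> span B)"

definition stmt_ii :: "'a1::real_inner set \<Rightarrow> ('a1 \<Rightarrow> 'a2::real_inner) \<Rightarrow> 'a1 \<Rightarrow> 'a2 \<Rightarrow> 'a2 \<Rightarrow> bool" where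
  "stmt_ii D1 A1 g xt eA1 \<longleftrightarrow>
    (let c1 = best_const D1 A1;
         F = (\<lambda>\<zeta>. (c1 * norm (adj D1 A1 \<zeta> - g) + norm (\<zeta> - xt))\<^sup>2);
         G = (\<lambda>\<phi>. 2 * inner g \<phi> - inner (2 *\<^sub>R xt + A1 \<phi>) (A1 \<phi>));
         \<zeta>h = eA1 + xt;
         \<phi>h = red_inv D1 A1 eA1
     in eA1 = red_adj_inv D1 A1 g - oproj (ran_op D1 A1) xt
      \<and> \<zeta>h \<in> adj_dom D1 A1 \<and> adj D1 A1 \<zeta>h = g
      \<and> (\<forall>\<zeta>\<in>adj_dom D1 A1. F \<zeta>h \<le> F \<zeta>) \<and> (norm eA1)\<^sup>2 = F \<zeta>h
      \<and> \<phi>h \<in> D1 \<and> (\<forall>\<phi>\<in>D1. G \<phi> \<le> G \<phi>h) \<and> (norm eA1)\<^sup>2 = G \<phi>h)"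

definition stmt_iii :: "'a2::real_inner set \<Rightarrow> ('a2 \<Rightarrow> 'a3::real_inner) \<Rightarrow> 'a2 \<Rightarrow> 'a2 \<Rightarrow> 'a2 \<Rightarrow> 'a2 \<Rightarrow> bool" where
  "stmt_iii D2 A2 f x xt eA2s \<longleftrightarrow>
    (let c2 = best_const D2 A2;
         A2s = adj D2 A2;
         D2s = adj_dom D2 A2;
         DAA = {\<xi> \<in> D2. A2 \<xi> \<in> D2s};
         AA = (\<lambda>\<xi>. A2s (A2 \<xi>));
         F1 = (\<lambda>\<xi> \<zeta>. (c2\<^sup>2 * norm (A2s \<zeta> - f) + c2 * norm (\<zeta> - A2 \<xi>) + norm (\<xi> - xt))\<^sup>2);
         F2 = (\<lambda>\<xi>. (c2\<^sup>2 * norm (AA \<xi> - f) + norm (\<xi> - xt))\<^sup>2);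
         G = (\<lambda>\<phi>. 2 * inner f \<phi> - inner (2 *\<^sub>R xt + AA \<phi>) (AA \<phi>));
         \<xi>h = eA2s + xt;
         \<zeta>h = A2 x;
         \<phi>h = red_inv D2 A2 (red_adj_inv D2 A2 eA2s)
     in eA2s = oproj (ran_op D2s A2s) x - oproj (ran_op D2s A2s) xt
      \<and> \<xi>h \<in> DAA \<and> A2 \<xi>h = A2 x \<and> AA \<xi>h = f
      \<and> \<zeta>h \<in> D2s \<and> A2s \<zeta>h = f
      \<and> (\<forall>\<xi>\<in>D2. \<forall>\<zeta>\<in>D2s. F1 \<xi>h \<zeta>h \<le> F1 \<xi> \<zeta>) \<and> (norm eA2s)\<^sup>2 = F1 \<xi>h \<zeta>h
      \<and> (\<forall>\<xi>\<in>DAA. F2 \<xi>h \<le> F2 \<xi>) \<and> (norm eA2s)\<^sup>2 = F2 \<xi>h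
      \<and> \<phi>h \<in> DAA \<and> (\<forall>\<phi>\<in>DAA. G \<phi> \<le> G \<phi>h) \<and> (norm eA2s)\<^sup>2 = G \<phi>h)"

end

theory Submission
  imports Defs
begin

text \<open>For a Hilbert complex with closed ranges the closed range theorem gives
  \<open>R(A\<^sup>*) = N(A)\<^sup>\<bottom>\<close>, hence the orthogonal decomposition
  \<open>H = R(A) \<oplus> K \<oplus> R(B\<^sup>*)\<close> with \<open>K = N(B) \<inter> N(A\<^sup>*)\<close>; the error components are the
  orthogonal projections of the error onto these three spaces. Each upper bound (minimum) comes from
  the Friedrichs inequality \<open>|x| \<le> c |A x|\<close> on the reduced domain together with the fact that
  projections are contractions, and is attained at the exact data. Each lower bound (maximum) comes
  from completing the square, \<open>2\<langle>a, e\<rangle> - |a|\<^sup>2 = |e|\<^sup>2 - |a - e|\<^sup>2\<close>, attained where \<open>a = e\<close>,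
  i.e. at the reduced preimage of the error component. The closed range theorem itself is obtained
  from the bounded inverse of \<open>A\<close> on its range (Baire category) and the Riesz representation.\<close>

lemma Cauchy_minimizing_sequence:
  fixes S :: "'a::real_inner set"
  assumes S: "subspace S" and s: "\<And>n. s n \<in> S"
    and d: "\<And>t. t \<in> S \<Longrightarrow> d \<le> norm (x - t)" "0 \<le> d"
    and min: "\<And>n. norm (x - s n)^2 < d^2 + 1 / (real n + 1)"
  shows "Cauchy s"
proof (rule metric_CauchyI)
  have par: "norm (s m - s n)^2 \<le> 2 / (real m + 1) + 2 / (real n + 1)" for m n
  proof -
    have "(1/2) *\<^sub>R (s m + s n) \<in> S"
      using S s by (simp add: subspace_add subspace_scale)
    then have "d^2 \<le> norm (x - (1/2) *\<^sub>R (s m + s n))^2"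
      using d by (simp add: power_mono)
    moreover have "norm (s m - s n)^2 = 2 * norm (x - s m)^2 + 2 * norm (x - s n)^2
        - 4 * norm (x - (1/2) *\<^sub>R (s m + s n))^2"
      by (simp add: power2_norm_eq_inner inner_diff_left inner_diff_right inner_add_left
          inner_add_right inner_commute algebra_simps)
    ultimately show ?thesis using min[of m] min[of n] by linarith
  qed
  fix e :: real assume e: "e > 0"
  obtain M :: nat where M: "4 / e^2 < real M" using reals_Archimedean2 by blast
  then have M_pos: "real M > 0" using e by (smt (verit) divide_pos_pos zero_less_power)
  have "dist (s m) (s n) < e" if "M \<le> m" "M \<le> n" for m n
  proof -
    have "2 / (real m + 1) \<le> 2 / real M" "2 / (real n + 1) \<le> 2 / real M"
      using that M_pos by (auto intro!: divide_left_mono)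
    then have "norm (s m - s n)^2 \<le> 4 / real M" using par[of m n] by simp
    also have "\<dots> < e^2" using M e M_pos by (simp add: field_simps)
    finally show ?thesis using e by (simp add: dist_norm power_less_imp_less_base)
  qed
  then show "\<exists>M. \<forall>m\<ge>M. \<forall>n\<ge>M. dist (s m) (s n) < e" by blast
qed

lemma nearest_point_in_closed_subspace:
  fixes S :: "'a::{real_inner,complete_space} set"
  assumes S: "subspace S" "closed S"
  shows "\<exists>p\<in>S. \<forall>s\<in>S. norm (x - p) \<le> norm (x - s)"
proof -
  define d where "d = Inf ((\<lambda>s. norm (x - s)) ` S)"
  have ne: "S \<noteq> {}" using S subspace_0 by auto
  have bdd: "bdd_below ((\<lambda>s. norm (x - s)) ` S)" by (rule bdd_belowI[of _ 0]) auto
  have d_le: "d \<le> norm (x - s)" if "s \<in> S" for s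
    unfolding d_def using bdd that by (simp add: cInf_lower)
  have d0: "0 \<le> d" unfolding d_def using ne by (intro cInf_greatest) auto
  have "\<exists>s\<in>S. norm (x - s)^2 < d^2 + 1 / (real n + 1)" for n
  proof -
    have "d < sqrt (d^2 + 1 / (real n + 1))"
      using d0 by (intro real_less_rsqrt) (simp add: add_pos_pos)
    then obtain s where "s \<in> S" "norm (x - s) < sqrt (d^2 + 1 / (real n + 1))"
      using cInf_lessD[of "(\<lambda>s. norm (x - s)) ` S"] ne unfolding d_def by auto
    then have "norm (x - s)^2 < (sqrt (d^2 + 1 / (real n + 1)))^2"
      by (intro power_strict_mono) auto
    also have "\<dots> = d^2 + 1 / (real n + 1)" by (simp add: add_nonneg_nonneg)
    finally show ?thesis using \<open>s \<in> S\<close> by blast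
  qed
  then obtain s where s: "\<And>n. s n \<in> S" "\<And>n. norm (x - s n)^2 < d^2 + 1 / (real n + 1)"
    by metis
  have "Cauchy s" using Cauchy_minimizing_sequence[OF S(1) s(1) d_le d0 s(2)] .
  then obtain p where lim: "s \<longlonglongrightarrow> p" using convergent_eq_Cauchy by blast
  have "p \<in> S" using S(2) s(1) lim closed_sequentially by blast
  have "(\<lambda>n. 1 / (real n + 1)) \<longlonglongrightarrow> 0"
    using LIMSEQ_inverse_real_of_nat by (simp add: inverse_eq_divide add.commute)
  then have upper: "(\<lambda>n. d^2 + 1 / (real n + 1)) \<longlonglongrightarrow> d^2 + 0"
    by (intro tendsto_intros)
  have "(\<lambda>n. norm (x - s n)^2) \<longlonglongrightarrow> norm (x - p)^2"
    by (intro tendsto_intros lim)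
  moreover have "\<exists>N. \<forall>n\<ge>N. norm (x - s n)^2 \<le> d^2 + 1 / (real n + 1)"
    using s(2) by (auto intro: less_imp_le)
  ultimately have "norm (x - p)^2 \<le> d^2 + 0" by (rule LIMSEQ_le[OF _ upper])
  then have "norm (x - p) \<le> d" using d0 power2_le_imp_le by simp
  then show ?thesis using \<open>p \<in> S\<close> by (auto intro: order_trans[OF _ d_le])
qed

lemma orthogonal_residual_of_nearest:
  fixes S :: "'a::real_inner set"
  assumes S: "subspace S" and p: "p \<in> S" and nearest: "\<And>s. s \<in> S \<Longrightarrow> norm (x - p) \<le> norm (x - s)"
    and s: "s \<in> S"
  shows "inner (x - p) s = 0"
proof (rule ccontr)
  define a where "a = inner (x - p) s"
  assume "inner (x - p) s \<noteq> 0"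
  then have a: "a \<noteq> 0" and ss: "inner s s > 0"
    unfolding a_def by (auto simp: inner_gt_zero_iff)
  define t where "t = a / inner s s"
  have "p + t *\<^sub>R s \<in> S" using S p s by (simp add: subspace_add subspace_scale)
  then have "norm (x - p)^2 \<le> norm (x - (p + t *\<^sub>R s))^2" by (simp add: nearest power_mono)
  also have "\<dots> = norm (x - p)^2 - 2 * t * a + t * t * inner s s"
    by (simp add: a_def power2_norm_eq_inner inner_diff_left inner_diff_right inner_add_left
        inner_add_right inner_commute algebra_simps)
  also have "\<dots> = norm (x - p)^2 - a^2 / inner s s"
    using ss by (simp add: t_def field_simps power2_eq_square)
  finally show False using a ss by (smt (verit) divide_pos_pos zero_less_power2)
qed

lemma oproj:
  fixes S :: "'a::{real_inner,complete_space} set"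
  assumes S: "subspace S" "closed S"
  shows oproj_in: "oproj S x \<in> S"
    and oproj_orthogonal: "s \<in> S \<Longrightarrow> inner (x - oproj S x) s = 0"
proof -
  obtain p where p: "p \<in> S" "\<And>s. s \<in> S \<Longrightarrow> norm (x - p) \<le> norm (x - s)"
    using nearest_point_in_closed_subspace[OF S] by blast
  have orth: "\<forall>s\<in>S. inner (x - p) s = 0"
    using orthogonal_residual_of_nearest[OF S(1) p] by blast
  have "oproj S x = p"
    unfolding oproj_def
  proof (rule the_equality)
    fix q assume q: "q \<in> S \<and> (\<forall>s\<in>S. inner (x - q) s = 0)"
    then have "q - p \<in> S" using S(1) p(1) by (simp add: subspace_diff)
    then have "inner (q - p) (q - p) = inner (x - p) (q - p) - inner (x - q) (q - p)"
      and "inner (x - p) (q - p) = 0" "inner (x - q) (q - p) = 0"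
      using orth q by (auto simp: inner_diff_left)
    then show "q = p" by simp
  qed (use p orth in blast)
  then show "oproj S x \<in> S" "s \<in> S \<Longrightarrow> inner (x - oproj S x) s = 0"
    using p(1) orth by auto
qed

lemma oproj_unique:
  fixes S :: "'a::{real_inner,complete_space} set"
  assumes S: "subspace S" "closed S" and p: "p \<in> S" "\<And>s. s \<in> S \<Longrightarrow> inner (x - p) s = 0"
  shows "oproj S x = p"
proof -
  have d: "oproj S x - p \<in> S" using subspace_diff[OF S(1) oproj_in[OF S] p(1)] .
  have "inner (oproj S x - p) (oproj S x - p)
      = inner (x - p) (oproj S x - p) - inner (x - oproj S x) (oproj S x - p)"
    by (simp add: inner_diff_left)
  also have "\<dots> = 0" using d oproj_orthogonal[OF S d] p(2)[OF d] by simp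
  finally show ?thesis by simp
qed

context
  fixes S :: "'a::{real_inner,complete_space} set"
  assumes S: "subspace S" "closed S"
begin

lemma inner_oproj:
  assumes "s \<in> S" shows "inner (oproj S x) s = inner x s"
  using oproj_orthogonal[OF S assms, of x] by (simp add: inner_diff_left)

lemma oproj_add: "oproj S (x + y) = oproj S x + oproj S y"
  by (rule oproj_unique[OF S])
    (simp_all add: subspace_add[OF S(1)] oproj_in[OF S] inner_diff_left inner_add_left inner_oproj)

lemma oproj_diff: "oproj S (x - y) = oproj S x - oproj S y"
  by (rule oproj_unique[OF S])
    (simp_all add: subspace_diff[OF S(1)] oproj_in[OF S] inner_diff_left inner_oproj)

lemma oproj_scaleR: "oproj S (c *\<^sub>R x) = c *\<^sub>R oproj S x"
  by (rule oproj_unique[OF S])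
    (simp_all add: subspace_scale[OF S(1)] oproj_in[OF S] inner_diff_left inner_oproj)

lemma oproj_of_mem: "s \<in> S \<Longrightarrow> oproj S s = s"
  by (rule oproj_unique[OF S]) simp_all

lemma oproj_eq_0: "(\<And>s. s \<in> S \<Longrightarrow> inner x s = 0) \<Longrightarrow> oproj S x = 0"
  by (rule oproj_unique[OF S]) (simp_all add: subspace_0[OF S(1)])

lemma norm_oproj_le: "norm (oproj S x) \<le> norm x"
proof -
  have "orthogonal (oproj S x) (x - oproj S x)"
    using oproj_orthogonal[OF S oproj_in[OF S]] by (simp add: orthogonal_def inner_commute)
  then have "(norm x)\<^sup>2 = (norm (oproj S x))\<^sup>2 + (norm (x - oproj S x))\<^sup>2"
    using norm_add_Pythagorean by fastforce
  then have "(norm (oproj S x))\<^sup>2 \<le> (norm x)\<^sup>2" by simp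
  then show ?thesis by (rule power2_le_imp_le) simp
qed

lemma orthogonal_comp_orthogonal_comp_subset: "S\<^sup>\<bottom>\<^sup>\<bottom> \<subseteq> S"
proof
  fix x assume x: "x \<in> S\<^sup>\<bottom>\<^sup>\<bottom>"
  have "x - oproj S x \<in> S\<^sup>\<bottom>"
    using oproj_orthogonal[OF S] by (simp add: orthogonal_comp_def orthogonal_def inner_commute)
  then have "orthogonal (x - oproj S x) x" using x unfolding orthogonal_comp_def by blast
  then have "inner x (x - oproj S x) = 0" by (simp add: orthogonal_def inner_commute)
  moreover have "inner (oproj S x) (x - oproj S x) = 0"
    using oproj_orthogonal[OF S oproj_in[OF S]] by (simp add: inner_commute)
  ultimately have "inner (x - oproj S x) (x - oproj S x) = 0" by (simp add: inner_diff_left)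
  then show "x \<in> S" using oproj_in[OF S, of x] by simp
qed

end

lemma closed_orthogonal_comp: "closed (S\<^sup>\<bottom>)"
proof -
  have "S\<^sup>\<bottom> = (\<Inter>s\<in>S. {x. inner s x = 0})"
    by (auto simp: orthogonal_comp_def orthogonal_def)
  then show ?thesis by (auto intro!: closed_Collect_eq continuous_intros)
qed

lemma norm_oproj_diff_le:
  fixes S :: "'a::{real_inner,complete_space} set"
  assumes S: "subspace S" "closed S"
  shows "norm (oproj S (a - t)) \<le> norm (oproj S b - oproj S a) + norm (b - t)"
proof -
  have "oproj S (a - t) = oproj S (b - t) - (oproj S b - oproj S a)" by (simp add: oproj_diff[OF S])
  then have "norm (oproj S (a - t)) \<le> norm (oproj S (b - t)) + norm (oproj S b - oproj S a)"
    by (metis norm_triangle_ineq4)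
  then show ?thesis using norm_oproj_le[OF S, of "b - t"] by simp
qed

lemma quadratic_maximum:
  fixes T :: "'a \<Rightarrow> 'b::real_inner"
  assumes G: "\<And>p. p \<in> M \<Longrightarrow> G p = 2 * inner (T p) e - inner (T p) (T p)"
    and ph: "ph \<in> M" "T ph = e"
  shows "\<forall>p\<in>M. G p \<le> G ph" "(norm e)\<^sup>2 = G ph"
proof -
  have G': "G p = (norm e)\<^sup>2 - (norm (T p - e))\<^sup>2" if "p \<in> M" for p
    using G[OF that] by (simp add: power2_norm_eq_inner inner_diff_left inner_diff_right inner_commute)
  show "(norm e)\<^sup>2 = G ph" using G'[OF ph(1)] ph(2) by simp
  then show "\<forall>p\<in>M. G p \<le> G ph" using G' by simp
qed

lemma subspace_image_additive:
  assumes S: "subspace S"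
    and add: "\<And>x y. x \<in> S \<Longrightarrow> y \<in> S \<Longrightarrow> f (x + y) = f x + f y"
    and scale: "\<And>x c. x \<in> S \<Longrightarrow> f (c *\<^sub>R x) = c *\<^sub>R f x"
  shows "subspace (f ` S)"
  unfolding subspace_def
proof (intro conjI ballI allI)
  show "0 \<in> f ` S" using scale[OF subspace_0[OF S], of 0] subspace_0[OF S] by (metis image_eqI scale_zero_left)
  fix u v assume "u \<in> f ` S" "v \<in> f ` S"
  then obtain x y where "x \<in> S" "y \<in> S" "u = f x" "v = f y" by blast
  then show "u + v \<in> f ` S" using subspace_add[OF S] add by (metis image_eqI)
next
  fix c u assume "u \<in> f ` S"
  then obtain x where "x \<in> S" "u = f x" by blast
  then show "c *\<^sub>R u \<in> f ` S" using subspace_scale[OF S] scale by (metis image_eqI)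
qed

text \<open>The library lemma \<open>summable_norm\<close> is stated for sort \<open>banach\<close>, which does not follow
  from the sort \<open>{real_inner, complete_space}\<close> of the spaces considered here.\<close>

lemma summable_norm_complete:
  fixes f :: "nat \<Rightarrow> 'a::{real_normed_vector,complete_space}"
  assumes norms: "summable (\<lambda>n. norm (f n))"
  shows "summable f" "norm (suminf f) \<le> (\<Sum>n. norm (f n))"
proof -
  define S where "S N = (\<Sum>k<N. f k)" for N
  define T where "T N = (\<Sum>k<N. norm (f k))" for N
  have "Cauchy T" unfolding T_def using summable_LIMSEQ[OF norms] LIMSEQ_imp_Cauchy by blast
  have dist_le: "dist (S m) (S n) \<le> dist (T m) (T n)" if "n \<le> m" for m n
  proof -
    have "S m - S n = (\<Sum>k\<in>{n..<m}. f k)" "T m - T n = (\<Sum>k\<in>{n..<m}. norm (f k))"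
      unfolding S_def T_def using that by (simp_all add: sum_diff_nat_ivl lessThan_atLeast0)
    then show ?thesis using norm_sum[of f "{n..<m}"] by (simp add: dist_norm)
  qed
  have "Cauchy S"
  proof (rule metric_CauchyI)
    fix e :: real assume "e > 0"
    then obtain M where "\<And>m n. m \<ge> M \<Longrightarrow> n \<ge> M \<Longrightarrow> dist (T m) (T n) < e"
      using metric_CauchyD[OF \<open>Cauchy T\<close>] by blast
    then show "\<exists>M. \<forall>m\<ge>M. \<forall>n\<ge>M. dist (S m) (S n) < e"
      using dist_le by (metis dist_commute le_less_trans nle_le)
  qed
  then show sf: "summable f"
    unfolding S_def summable_def sums_def using convergent_eq_Cauchy convergent_def by blast
  show "norm (suminf f) \<le> (\<Sum>n. norm (f n))"
  proof (rule LIMSEQ_le)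
    show "(\<lambda>N. norm (S N)) \<longlonglongrightarrow> norm (suminf f)"
      unfolding S_def by (intro tendsto_intros summable_LIMSEQ sf)
    show "T \<longlonglongrightarrow> (\<Sum>n. norm (f n))" unfolding T_def by (rule summable_LIMSEQ[OF norms])
    show "\<exists>N. \<forall>n\<ge>N. norm (S n) \<le> T n" unfolding S_def T_def by (auto intro: norm_sum)
  qed
qed

lemma Baire_closed_cover:
  fixes Y :: "'a::complete_space set" and F :: "nat \<Rightarrow> 'a set"
  assumes Y: "closed Y" "Y \<noteq> {}" and cover: "Y \<subseteq> (\<Union>n. F n)"
  shows "\<exists>n. \<exists>u0\<in>Y. \<exists>r>0. \<forall>u\<in>Y. dist u u0 < r \<longrightarrow> u \<in> closure (F n)"
proof (rule ccontr)
  assume none: "\<not> ?thesis"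
  define X where "X = top_of_set Y"
  have "X interior_of (\<Union>n. Y \<inter> closure (F n)) = {}"
  proof (rule Baire_category_alt)
    show "completely_metrizable_space X \<or> locally_compact_space X \<and> regular_space X"
      unfolding X_def using Y(1) closed_closedin completely_metrizable_space_closedin
        completely_metrizable_space_euclidean by blast
    fix T assume "T \<in> range (\<lambda>n. Y \<inter> closure (F n))"
    then obtain n where T: "T = Y \<inter> closure (F n)" by blast
    have "X interior_of T = {}"
    proof (rule ccontr)
      assume "X interior_of T \<noteq> {}"
      then obtain x U where U: "openin X U" "x \<in> U" "U \<subseteq> T" unfolding interior_of_def by blast
      then obtain e where "e > 0" "\<forall>x'\<in>Y. dist x' x < e \<longrightarrow> x' \<in> U" "x \<in> Y"
        unfolding X_def openin_euclidean_subtopology_iff by blast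
      then show False using none U(3) T by blast
    qed
    then show "closedin X T \<and> X interior_of T = {}"
      unfolding X_def T by (simp add: closedin_closed_Int)
  qed simp
  moreover have "(\<Union>n. Y \<inter> closure (F n)) = Y" using cover closure_subset by blast
  ultimately show False using Y(2) interior_of_topspace[of X] unfolding X_def by simp
qed

lemma Riesz_representation:
  fixes L :: "'a::{real_inner,complete_space} \<Rightarrow> real"
  assumes "bounded_linear L"
  shows "\<exists>w. \<forall>u. L u = inner u w"
proof (cases "\<forall>u. L u = 0")
  case False
  then obtain u0 where u0: "L u0 \<noteq> 0" by blast
  interpret L: bounded_linear L by (fact assms)
  define K where "K = {u. L u = 0}"
  have K: "subspace K" "closed K"
    unfolding K_def subspace_def by (auto simp: L.add L.scale L.zero
        intro!: closed_Collect_eq continuous_on_const linear_continuous_on assms)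
  define q where "q = u0 - oproj K u0"
  have "L (oproj K u0) = 0" using oproj_in[OF K] unfolding K_def by simp
  then have Lq: "L q = L u0" unfolding q_def by (simp add: L.diff)
  have "L u = inner u ((L q / inner q q) *\<^sub>R q)" for u
  proof -
    have mem: "u - (L u / L q) *\<^sub>R q \<in> K" using Lq u0 unfolding K_def by (simp add: L.diff L.scale)
    have "inner q (u - (L u / L q) *\<^sub>R q) = 0"
      using oproj_orthogonal[OF K mem, of u0] unfolding q_def by (simp add: inner_commute)
    moreover have "inner q q \<noteq> 0" using Lq u0 L.zero by auto
    ultimately show ?thesis using Lq u0 by (simp add: inner_diff_right inner_commute field_simps)
  qed
  then show ?thesis by blast
qed (metis inner_zero_right)

lemma Inf_best_constant:
  fixes f g :: "'a \<Rightarrow> real"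
  assumes C: "0 \<le> C" "\<And>x. x \<in> X \<Longrightarrow> f x \<le> C * g x" and g: "\<And>x. x \<in> X \<Longrightarrow> 0 \<le> g x"
  defines "c \<equiv> Inf {c. 0 \<le> c \<and> (\<forall>x\<in>X. f x \<le> c * g x)}"
  shows "0 \<le> c" "x \<in> X \<Longrightarrow> f x \<le> c * g x"
proof -
  let ?S = "{c. 0 \<le> c \<and> (\<forall>x\<in>X. f x \<le> c * g x)}"
  have ne: "?S \<noteq> {}" using C by blast
  show "0 \<le> c" unfolding c_def using ne by (rule cInf_greatest) simp
  assume x: "x \<in> X"
  show "f x \<le> c * g x"
  proof (cases "g x = 0")
    case True
    then show ?thesis using C(2)[OF x] by simp
  next
    case False
    with g[OF x] have pos: "g x > 0" by simp
    have "f x / g x \<le> c"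
      unfolding c_def using ne x pos by (intro cInf_greatest) (auto simp: divide_le_eq)
    then show ?thesis using pos by (simp add: divide_le_eq)
  qed
qed

locale closed_operator =
  fixes D :: "'a::{real_inner,complete_space} set" and A :: "'a \<Rightarrow> 'b::{real_inner,complete_space}"
  assumes closed_dd_op: "closed_dd_op D A"
begin

abbreviation ran_adj :: "'a set" where "ran_adj \<equiv> ran_op (adj_dom D A) (adj D A)"

abbreviation ker_adj :: "'b set" where "ker_adj \<equiv> ker_op (adj_dom D A) (adj D A)"

lemma subspace_dom: "subspace D"
  and A_add: "x \<in> D \<Longrightarrow> y \<in> D \<Longrightarrow> A (x + y) = A x + A y"
  and A_scaleR: "x \<in> D \<Longrightarrow> A (c *\<^sub>R x) = c *\<^sub>R A x"
  and dense_dom: "closure D = UNIV"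
  and closed_graph: "closed {(x, A x) | x. x \<in> D}"
  using closed_dd_op unfolding closed_dd_op_def lin_on_def by blast+

lemma A_0: "A 0 = 0"
  using A_scaleR[OF subspace_0[OF subspace_dom], of 0] by simp

lemma A_diff: "x \<in> D \<Longrightarrow> y \<in> D \<Longrightarrow> A (x - y) = A x - A y"
  using A_add[of x "- y"] A_scaleR[of y "- 1"] subspace_neg[OF subspace_dom, of y] by simp

lemma A_sum: "(\<And>k. k < (n::nat) \<Longrightarrow> f k \<in> D) \<Longrightarrow> A (\<Sum>k<n. f k) = (\<Sum>k<n. A (f k))"
proof (induction n)
  case (Suc n)
  then have "(\<Sum>k<n. f k) \<in> D" by (intro subspace_sum[OF subspace_dom]) auto
  with Suc show ?case by (simp add: A_add)
qed (simp add: A_0)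

lemma graph_limit:
  assumes "\<And>n. f n \<in> D" "f \<longlonglongrightarrow> v" "(\<lambda>n. A (f n)) \<longlonglongrightarrow> u"
  shows "v \<in> D" "A v = u"
proof -
  have "(f n, A (f n)) \<in> {(x, A x) | x. x \<in> D}" for n using assms(1) by auto
  from closed_sequentially[OF closed_graph this tendsto_Pair[OF assms(2,3)]]
  have "(v, u) \<in> {(x, A x) | x. x \<in> D}" .
  then show "v \<in> D" "A v = u" by auto
qed

lemma adjI:
  assumes "\<And>x. x \<in> D \<Longrightarrow> inner (A x) y = inner x z"
  shows "y \<in> adj_dom D A" "adj D A y = z"
proof -
  show "y \<in> adj_dom D A" unfolding adj_dom_def using assms by blast
  have unique: "z' = z" if "\<forall>x\<in>D. inner (A x) y = inner x z'" for z'
  proof -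
    have "D \<subseteq> {x. inner x (z' - z) = 0}"
      using that assms by (auto simp: inner_diff_right)
    moreover have "closed {x. inner x (z' - z) = 0}" by (intro closed_Collect_eq continuous_intros)
    ultimately have "closure D \<subseteq> {x. inner x (z' - z) = 0}" by (rule closure_minimal)
    then have "inner (z' - z) (z' - z) = 0" using dense_dom by blast
    then show ?thesis by simp
  qed
  show "adj D A y = z"
    unfolding adj_def by (rule the_equality) (use assms unique in auto)
qed

lemma inner_adj:
  assumes "y \<in> adj_dom D A" "x \<in> D"
  shows "inner (A x) y = inner x (adj D A y)"
proof -
  obtain z where z: "\<forall>x\<in>D. inner (A x) y = inner x z" using assms(1) unfolding adj_dom_def by blast
  then have "adj D A y = z" using adjI by blast
  then show ?thesis using z assms(2) by simp
qed

lemma adj_0: "0 \<in> adj_dom D A" "adj D A 0 = 0"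
  using adjI[of 0 0] by simp_all

lemma adj_add:
  assumes "y \<in> adj_dom D A" "y' \<in> adj_dom D A"
  shows "y + y' \<in> adj_dom D A" "adj D A (y + y') = adj D A y + adj D A y'"
  using adjI[of "y + y'" "adj D A y + adj D A y'"] by (simp_all add: inner_add_right inner_adj assms)

lemma adj_scaleR:
  assumes "y \<in> adj_dom D A"
  shows "c *\<^sub>R y \<in> adj_dom D A" "adj D A (c *\<^sub>R y) = c *\<^sub>R adj D A y"
  using adjI[of "c *\<^sub>R y" "c *\<^sub>R adj D A y"] by (simp_all add: inner_adj assms)

lemma adj_diff:
  assumes "y \<in> adj_dom D A" "y' \<in> adj_dom D A"
  shows "y - y' \<in> adj_dom D A" "adj D A (y - y') = adj D A y - adj D A y'"
  using adjI[of "y - y'" "adj D A y - adj D A y'"] by (simp_all add: inner_diff_right inner_adj assms)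

lemma subspace_adj_dom: "subspace (adj_dom D A)"
  unfolding subspace_def using adj_0 adj_add adj_scaleR by blast

lemma ker_adj_eq_orthogonal_comp_ran: "ker_adj = (ran_op D A)\<^sup>\<bottom>"
proof -
  have "y \<in> ker_adj \<longleftrightarrow> (\<forall>x\<in>D. inner (A x) y = 0)" for y
    using inner_adj adjI[of y 0] unfolding ker_op_def by auto
  then show ?thesis by (auto simp: orthogonal_comp_def orthogonal_def ran_op_def)
qed

lemma subspace_ker: "subspace (ker_op D A)"
  unfolding subspace_def ker_op_def
  by (simp add: subspace_0[OF subspace_dom] subspace_add[OF subspace_dom]
      subspace_scale[OF subspace_dom] A_0 A_add A_scaleR)

lemma closed_ker: "closed (ker_op D A)"
proof -
  have "ker_op D A = (\<lambda>x. (x, 0)) -` {(x, A x) | x. x \<in> D}" unfolding ker_op_def by auto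
  moreover have "closed ((\<lambda>x. (x, 0::'b)) -` {(x, A x) | x. x \<in> D})"
    by (intro closed_vimage closed_graph continuous_intros)
  ultimately show ?thesis by simp
qed

lemma subspace_ran: "subspace (ran_op D A)"
  unfolding ran_op_def using subspace_dom A_add A_scaleR by (rule subspace_image_additive)

lemma subspace_ran_adj: "subspace ran_adj"
  unfolding ran_op_def using subspace_adj_dom adj_add(2) adj_scaleR(2) by (rule subspace_image_additive)

lemma ran_adj_subset_orthogonal_comp_ker: "ran_adj \<subseteq> (ker_op D A)\<^sup>\<bottom>"
  unfolding orthogonal_comp_def orthogonal_def ran_op_def ker_op_def
  using inner_adj by (fastforce simp: inner_commute)


lemma series_preimage:
  assumes v: "\<And>k. v k \<in> D" "\<And>k. norm (v k) \<le> C * (1/2)^k"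
    and lim: "(\<lambda>N. A (\<Sum>k<N. v k)) \<longlonglongrightarrow> u"
  shows "suminf v \<in> D" "A (suminf v) = u" "norm (suminf v) \<le> 2 * C"
proof -
  have geom: "summable (\<lambda>k. C * (1/2::real)^k)" by (intro summable_mult summable_geometric) simp
  then have norms: "summable (\<lambda>k. norm (v k))" by (rule summable_comparison_test[rotated]) (use v in auto)
  have "(\<lambda>N. \<Sum>k<N. v k) \<longlonglongrightarrow> suminf v"
    using summable_norm_complete(1)[OF norms] by (rule summable_LIMSEQ)
  moreover have "(\<Sum>k<N. v k) \<in> D" for N using v(1) by (intro subspace_sum[OF subspace_dom]) auto
  moreover have "A (\<Sum>k<N. v k) = (\<Sum>k<N. A (v k))" for N using v(1) by (rule A_sum)
  ultimately show "suminf v \<in> D" "A (suminf v) = u" using graph_limit[OF _ _ lim] by blast+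
  have "norm (suminf v) \<le> (\<Sum>k. norm (v k))" by (rule summable_norm_complete(2)[OF norms])
  also have "\<dots> \<le> (\<Sum>k. C * (1/2::real)^k)" by (rule suminf_le[OF _ norms geom]) (use v in auto)
  also have "\<dots> = 2 * C" using suminf_geometric[of "1/2::real"] suminf_mult[of "\<lambda>k. (1/2::real)^k" C]
    by simp
  finally show "norm (suminf v) \<le> 2 * C" .
qed

end

locale closed_range_operator = closed_operator +
  assumes closed_ran: "closed (ran_op D A)"
begin

lemma ran_ball_in_closure_bounded_image:
  "\<exists>n. \<exists>u0\<in>ran_op D A. \<exists>r>0. \<forall>u\<in>ran_op D A.
     dist u u0 < r \<longrightarrow> u \<in> closure (A ` {v\<in>D. norm v \<le> real n})"
proof (rule Baire_closed_cover[OF closed_ran])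
  show "ran_op D A \<noteq> {}" using subspace_0[OF subspace_ran] by blast
  show "ran_op D A \<subseteq> (\<Union>n. A ` {v\<in>D. norm v \<le> real n})"
    unfolding ran_op_def using real_arch_simple by blast
qed

lemma approx_preimage_near_0:
  "\<exists>n. \<exists>r>0. \<forall>z\<in>ran_op D A. norm z < r \<longrightarrow> (\<forall>e>0. \<exists>v\<in>D. norm (A v - z) < e \<and> norm v \<le> 2 * real n)"
proof -
  define F where "F n = A ` {v\<in>D. norm v \<le> real n}" for n
  obtain n u0 r where r: "r > 0" "u0 \<in> ran_op D A"
    and cl: "\<And>u. u \<in> ran_op D A \<Longrightarrow> dist u u0 < r \<Longrightarrow> u \<in> closure (F n)"
    using ran_ball_in_closure_bounded_image unfolding F_def by blast
  have "\<exists>v\<in>D. norm (A v - z) < e \<and> norm v \<le> 2 * real n"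
    if z: "z \<in> ran_op D A" "norm z < r" and e: "e > 0" for z e
  proof -
    have "u0 + z \<in> closure (F n)"
      using z by (intro cl) (simp_all add: subspace_add[OF subspace_ran r(2)] dist_norm)
    then obtain a where "a \<in> F n" "dist a (u0 + z) < e / 2"
      using e unfolding closure_approachable by (meson half_gt_zero)
    then obtain v1 where v1: "v1 \<in> D" "norm v1 \<le> real n" "dist (A v1) (u0 + z) < e / 2"
      unfolding F_def by blast
    have "u0 \<in> closure (F n)" using cl[OF r(2)] r(1) by simp
    then obtain b where "b \<in> F n" "dist b u0 < e / 2"
      using e unfolding closure_approachable by (meson half_gt_zero)
    then obtain v2 where v2: "v2 \<in> D" "norm v2 \<le> real n" "dist (A v2) u0 < e / 2"
      unfolding F_def by blast
    have "A (v1 - v2) - z = (A v1 - (u0 + z)) - (A v2 - u0)" using A_diff[OF v1(1) v2(1)] by simp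
    then have "norm (A (v1 - v2) - z) \<le> norm (A v1 - (u0 + z)) + norm (A v2 - u0)"
      by (metis norm_triangle_ineq4)
    then have "norm (A (v1 - v2) - z) < e" using v1(3) v2(3) by (simp add: dist_norm)
    moreover have "norm (v1 - v2) \<le> 2 * real n"
      using v1(2) v2(2) norm_triangle_ineq4[of v1 v2] by simp
    ultimately show ?thesis using subspace_diff[OF subspace_dom v1(1) v2(1)] by blast
  qed
  then show ?thesis using r(1) by blast
qed

lemma approx_preimage_half:
  "\<exists>M\<ge>0. \<forall>u\<in>ran_op D A. \<exists>v\<in>D. norm (u - A v) \<le> norm u / 2 \<and> norm v \<le> M * norm u"
proof -
  obtain n r where r: "r > 0" and approx: "\<And>z e. z \<in> ran_op D A \<Longrightarrow> norm z < r \<Longrightarrow> e > 0 \<Longrightarrow>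
      \<exists>v\<in>D. norm (A v - z) < e \<and> norm v \<le> 2 * real n"
    using approx_preimage_near_0 by blast
  define M where "M = 4 * real n / r"
  have "\<exists>v\<in>D. norm (u - A v) \<le> norm u / 2 \<and> norm v \<le> M * norm u" if u: "u \<in> ran_op D A" for u
  proof (cases "u = 0")
    case True
    then show ?thesis using subspace_0[OF subspace_dom] A_0 by auto
  next
    case False
    then have nu: "norm u > 0" by simp
    define s where "s = r / (2 * norm u)"
    have s: "s > 0" "norm (s *\<^sub>R u) < r" unfolding s_def using r nu by simp_all
    obtain v' where v': "v' \<in> D" "norm (A v' - s *\<^sub>R u) < r / 4" "norm v' \<le> 2 * real n"
      using approx[OF subspace_scale[OF subspace_ran u] s(2), of "r / 4"] r by auto
    have "u - A ((1 / s) *\<^sub>R v') = - ((1 / s) *\<^sub>R (A v' - s *\<^sub>R u))"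
      using s(1) by (simp add: A_scaleR[OF v'(1)] algebra_simps)
    then have "norm (u - A ((1 / s) *\<^sub>R v')) = (1 / s) * norm (A v' - s *\<^sub>R u)"
      using s(1) by simp
    also have "\<dots> \<le> (1 / s) * (r / 4)" using v'(2) s(1) by (intro mult_left_mono) auto
    also have "\<dots> = norm u / 2" unfolding s_def using r nu by (simp add: field_simps)
    finally have "norm (u - A ((1 / s) *\<^sub>R v')) \<le> norm u / 2" .
    moreover have "norm ((1 / s) *\<^sub>R v') = (1 / s) * norm v'" using s(1) by simp
    moreover have "(1 / s) * norm v' \<le> (1 / s) * (2 * real n)"
      using v'(3) s(1) by (intro mult_left_mono) auto
    moreover have "(1 / s) * (2 * real n) = M * norm u"
      unfolding s_def M_def using r nu by (simp add: field_simps)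
    ultimately show ?thesis using subspace_scale[OF subspace_dom v'(1), of "1 / s"] by auto
  qed
  moreover have "M \<ge> 0" unfolding M_def using r by simp
  ultimately show ?thesis by blast
qed

lemma bounded_preimage: "\<exists>C\<ge>0. \<forall>u\<in>ran_op D A. \<exists>v\<in>D. A v = u \<and> norm v \<le> C * norm u"
proof -
  obtain M where M: "M \<ge> 0"
    and "\<forall>u\<in>ran_op D A. \<exists>v. v \<in> D \<and> norm (u - A v) \<le> norm u / 2 \<and> norm v \<le> M * norm u"
    using approx_preimage_half by blast
  then obtain \<phi> where \<phi>: "\<And>u. u \<in> ran_op D A \<Longrightarrow>
      \<phi> u \<in> D \<and> norm (u - A (\<phi> u)) \<le> norm u / 2 \<and> norm (\<phi> u) \<le> M * norm u"
    by metis
  have "\<exists>v\<in>D. A v = u \<and> norm v \<le> (2 * M) * norm u" if u: "u \<in> ran_op D A" for u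
  proof -
    \<comment> \<open>\<open>r k\<close> is the residual after \<open>k\<close> correction steps; the corrections \<open>\<phi> (r k)\<close>
      decay geometrically, so their sum converges to a preimage of \<open>u\<close>.\<close>
    define r where "r k = ((\<lambda>w. w - A (\<phi> w)) ^^ k) u" for k
    have r_Suc: "r (Suc k) = r k - A (\<phi> (r k))" for k unfolding r_def by simp
    have r: "r k \<in> ran_op D A \<and> norm (r k) \<le> (1/2)^k * norm u" for k
    proof (induction k)
      case (Suc k)
      then have "A (\<phi> (r k)) \<in> ran_op D A" using \<phi> unfolding ran_op_def by blast
      then show ?case
        using Suc \<phi>[of "r k"] subspace_diff[OF subspace_ran] unfolding r_Suc by auto
    qed (simp add: r_def u)
    have partial: "A (\<Sum>k<N. \<phi> (r k)) = u - r N" for N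
    proof (induction N)
      case (Suc N)
      have "(\<Sum>k<N. \<phi> (r k)) \<in> D" using \<phi> r by (intro subspace_sum[OF subspace_dom]) auto
      with Suc show ?case using \<phi> r by (simp add: A_add r_Suc)
    qed (simp add: A_0 r_def)
    have "r \<longlonglongrightarrow> 0"
      by (rule Lim_null_comparison[of _ "\<lambda>k. (1/2)^k * norm u"])
        (use r in \<open>auto intro!: tendsto_mult_left_zero LIMSEQ_power_zero\<close>)
    then have "(\<lambda>N. A (\<Sum>k<N. \<phi> (r k))) \<longlonglongrightarrow> u"
      unfolding partial using tendsto_diff[OF tendsto_const, of r 0 _ u] by simp
    moreover have "norm (\<phi> (r k)) \<le> (M * norm u) * (1/2)^k" for k
      using \<phi>[of "r k"] r[of k] M by (smt (verit) mult.commute mult.left_commute mult_left_mono)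
    ultimately show ?thesis
      using series_preimage[of "\<lambda>k. \<phi> (r k)" "M * norm u" u] \<phi> r by (auto simp: algebra_simps)
  qed
  then show ?thesis using M by (intro exI[of _ "2 * M"]) auto
qed

lemma functional_of_orthogonal_ker:
  assumes z: "z \<in> (ker_op D A)\<^sup>\<bottom>"
  shows "\<exists>L. bounded_linear L \<and> (\<forall>x\<in>D. L (A x) = inner x z)"
proof -
  define Y where "Y = ran_op D A"
  have Y: "subspace Y" "closed Y" unfolding Y_def using subspace_ran closed_ran by auto
  obtain C where C: "C \<ge> 0" "\<And>u. u \<in> Y \<Longrightarrow> \<exists>v\<in>D. A v = u \<and> norm v \<le> C * norm u"
    using bounded_preimage unfolding Y_def by blast
  have indep: "inner v z = inner v' z" if "v \<in> D" "v' \<in> D" "A v = A v'" for v v'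
  proof -
    have "v - v' \<in> ker_op D A"
      using that A_diff subspace_diff[OF subspace_dom] unfolding ker_op_def by simp
    then have "inner (v - v') z = 0" using z by (simp add: orthogonal_comp_def orthogonal_def)
    then show ?thesis by (simp add: inner_diff_left)
  qed
  define pre where "pre u = (SOME v. v \<in> D \<and> A v = u)" for u
  have pre: "pre u \<in> D" "A (pre u) = u" if "u \<in> Y" for u
    using someI_ex[of "\<lambda>v. v \<in> D \<and> A v = u"] that unfolding pre_def Y_def ran_op_def by blast+
  define L where "L u = inner (pre (oproj Y u)) z" for u
  have L: "L u = inner v z" if "v \<in> D" "A v = oproj Y u" for u v
    unfolding L_def using indep pre oproj_in[OF Y] that by metis
  have "bounded_linear L"
  proof (rule bounded_linear_intro[of _ "C * norm z"])
    fix x y :: 'b and c :: real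
    have px: "pre (oproj Y x) \<in> D" "A (pre (oproj Y x)) = oproj Y x" and
      py: "pre (oproj Y y) \<in> D" "A (pre (oproj Y y)) = oproj Y y"
      using pre oproj_in[OF Y] by auto
    show "L (x + y) = L x + L y"
      using L[of "pre (oproj Y x) + pre (oproj Y y)" "x + y"] px py
      by (simp add: A_add subspace_add[OF subspace_dom] oproj_add[OF Y] L_def inner_add_left)
    show "L (c *\<^sub>R x) = c *\<^sub>R L x"
      using L[of "c *\<^sub>R pre (oproj Y x)" "c *\<^sub>R x"] px
      by (simp add: A_scaleR subspace_scale[OF subspace_dom] oproj_scaleR[OF Y] L_def)
    obtain v where v: "v \<in> D" "A v = oproj Y x" "norm v \<le> C * norm (oproj Y x)"
      using C(2) oproj_in[OF Y] by blast
    have "norm (L x) \<le> norm v * norm z" using L[OF v(1,2)] Cauchy_Schwarz_ineq2 by simp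
    also have "\<dots> \<le> C * norm x * norm z"
      using v(3) norm_oproj_le[OF Y, of x] C(1) by (simp add: mult_mono order_trans)
    finally show "norm (L x) \<le> norm x * (C * norm z)" by (simp add: algebra_simps)
  qed
  moreover have "L (A x) = inner x z" if "x \<in> D" for x
    using L[OF that] oproj_of_mem[OF Y, of "A x"] that unfolding Y_def ran_op_def by simp
  ultimately show ?thesis by blast
qed

theorem ran_adj_eq_orthogonal_comp_ker: "ran_adj = (ker_op D A)\<^sup>\<bottom>"
proof
  show "(ker_op D A)\<^sup>\<bottom> \<subseteq> ran_adj"
  proof
    fix z assume "z \<in> (ker_op D A)\<^sup>\<bottom>"
    then obtain L where L: "bounded_linear L" "\<And>x. x \<in> D \<Longrightarrow> L (A x) = inner x z"
      using functional_of_orthogonal_ker by blast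
    obtain w where "\<forall>u. L u = inner u w" using Riesz_representation[OF L(1)] by blast
    then have "w \<in> adj_dom D A" "adj D A w = z" using L(2) by (auto intro: adjI)
    then show "z \<in> ran_adj" unfolding ran_op_def by blast
  qed
qed (rule ran_adj_subset_orthogonal_comp_ker)

lemma closed_ran_adj: "closed ran_adj"
  unfolding ran_adj_eq_orthogonal_comp_ker by (rule closed_orthogonal_comp)

lemma ker_eq_orthogonal_comp_ran_adj: "ker_op D A = ran_adj\<^sup>\<bottom>"
proof
  show "ran_adj\<^sup>\<bottom> \<subseteq> ker_op D A"
    unfolding ran_adj_eq_orthogonal_comp_ker
    by (rule orthogonal_comp_orthogonal_comp_subset[OF subspace_ker closed_ker])
qed (simp add: ran_adj_eq_orthogonal_comp_ker orthogonal_comp_subset)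

lemma subspace_closed_ran: "subspace (ran_op D A)" "closed (ran_op D A)"
  using subspace_ran closed_ran by auto

lemma subspace_closed_ran_adj:
  "subspace ran_adj" "closed ran_adj"
  using subspace_ran_adj closed_ran_adj by auto

lemma red_dom_eq: "red_dom D A = D \<inter> (ker_op D A)\<^sup>\<bottom>"
  unfolding red_dom_def ran_adj_eq_orthogonal_comp_ker ..

lemma diff_oproj_ran_adj_in_ker: "u - oproj ran_adj u \<in> ker_op D A"
  unfolding ker_eq_orthogonal_comp_ran_adj orthogonal_comp_def orthogonal_def
  using oproj_orthogonal[OF subspace_closed_ran_adj] by (simp add: inner_commute)

lemma diff_oproj_ran_in_ker_adj:
  "u - oproj (ran_op D A) u \<in> ker_adj"
  unfolding ker_adj_eq_orthogonal_comp_ran orthogonal_comp_def orthogonal_def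
  using oproj_orthogonal[OF subspace_closed_ran] by (simp add: inner_commute)

lemma oproj_ran_adj_in_red_dom:
  assumes "u \<in> D"
  shows "oproj ran_adj u \<in> red_dom D A"
    "A (oproj ran_adj u) = A u"
proof -
  let ?p = "oproj ran_adj u"
  have k: "u - ?p \<in> D" "A (u - ?p) = 0" using diff_oproj_ran_adj_in_ker[of u] unfolding ker_op_def by auto
  then have "?p \<in> D" using subspace_diff[OF subspace_dom assms k(1)] by simp
  then show "A ?p = A u" using A_diff[OF assms k(1)] k(2) by simp
  show "?p \<in> red_dom D A"
    using \<open>?p \<in> D\<close> oproj_in[OF subspace_closed_ran_adj] unfolding red_dom_def by blast
qed

lemma oproj_ran_in_adj_dom:
  assumes "w \<in> adj_dom D A"
  shows "oproj (ran_op D A) w \<in> adj_dom D A" "adj D A (oproj (ran_op D A) w) = adj D A w"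
  using adj_diff[OF assms, of "w - oproj (ran_op D A) w"] diff_oproj_ran_in_ker_adj[of w]
  unfolding ker_op_def by auto

lemma oproj_ran_adj_diff_add:
  assumes "x \<in> D"
  shows "oproj ran_adj (x - t) + t \<in> D" "A (oproj ran_adj (x - t) + t) = A x"
proof -
  have eq: "oproj ran_adj (x - t) + t = oproj ran_adj x + (t - oproj ran_adj t)"
    by (simp add: oproj_diff[OF subspace_closed_ran_adj])
  show "oproj ran_adj (x - t) + t \<in> D" "A (oproj ran_adj (x - t) + t) = A x"
    unfolding eq using A_add subspace_add[OF subspace_dom] oproj_ran_adj_in_red_dom[OF assms]
      diff_oproj_ran_adj_in_ker[of t] unfolding red_dom_def ker_op_def by auto
qed

lemma oproj_ran_diff_add:
  assumes "x \<in> adj_dom D A"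
  shows "oproj (ran_op D A) (x - t) + t \<in> adj_dom D A"
    "adj D A (oproj (ran_op D A) (x - t) + t) = adj D A x"
proof -
  have eq: "oproj (ran_op D A) (x - t) + t = oproj (ran_op D A) x + (t - oproj (ran_op D A) t)"
    by (simp add: oproj_diff[OF subspace_closed_ran])
  show "oproj (ran_op D A) (x - t) + t \<in> adj_dom D A"
    "adj D A (oproj (ran_op D A) (x - t) + t) = adj D A x"
    unfolding eq using adj_add oproj_ran_in_adj_dom[OF assms] diff_oproj_ran_in_ker_adj[of t]
    unfolding ker_op_def by auto
qed

lemma red_inv:
  assumes "u \<in> ran_op D A"
  shows "red_inv D A u \<in> red_dom D A" "A (red_inv D A u) = u"
proof -
  let ?P = "oproj ran_adj"
  obtain v0 where v0: "v0 \<in> D" "A v0 = u" using assms unfolding ran_op_def by blast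
  have ex1: "\<exists>!v. v \<in> red_dom D A \<and> A v = u"
  proof
    show "?P v0 \<in> red_dom D A \<and> A (?P v0) = u"
      using oproj_ran_adj_in_red_dom[OF v0(1)] v0(2) by simp
    fix v assume v: "v \<in> red_dom D A \<and> A v = u"
    then have "v0 - v \<in> ran_adj\<^sup>\<bottom>"
      using v0 A_diff subspace_diff[OF subspace_dom]
      unfolding red_dom_def ker_op_def ker_eq_orthogonal_comp_ran_adj[symmetric] by auto
    then show "v = ?P v0"
      using v oproj_unique[OF subspace_closed_ran_adj, of v v0] unfolding red_dom_def
      by (auto simp: orthogonal_comp_def orthogonal_def inner_commute)
  qed
  then show "red_inv D A u \<in> red_dom D A" "A (red_inv D A u) = u"
    using theI'[OF ex1] unfolding red_inv_def by blast+
qed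

lemma red_adj_inv:
  assumes "z \<in> ran_adj"
  shows "red_adj_inv D A z \<in> red_adj_dom D A" "adj D A (red_adj_inv D A z) = z"
    and red_adj_inv_unique: "w \<in> red_adj_dom D A \<Longrightarrow> adj D A w = z \<Longrightarrow> red_adj_inv D A z = w"
proof -
  let ?P = "oproj (ran_op D A)"
  obtain w0 where w0: "w0 \<in> adj_dom D A" "adj D A w0 = z" using assms unfolding ran_op_def by blast
  have ex1: "\<exists>!w. w \<in> red_adj_dom D A \<and> adj D A w = z"
  proof
    show "?P w0 \<in> red_adj_dom D A \<and> adj D A (?P w0) = z"
      using oproj_ran_in_adj_dom[OF w0(1)] w0(2) oproj_in[OF subspace_closed_ran]
      unfolding red_adj_dom_def by simp
    fix w assume w: "w \<in> red_adj_dom D A \<and> adj D A w = z"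
    then have "w0 - w \<in> (ran_op D A)\<^sup>\<bottom>"
      using w0 adj_diff unfolding red_adj_dom_def ker_op_def ker_adj_eq_orthogonal_comp_ran[symmetric]
      by auto
    then show "w = ?P w0"
      using w oproj_unique[OF subspace_closed_ran, of w w0] unfolding red_adj_dom_def
      by (auto simp: orthogonal_comp_def orthogonal_def inner_commute)
  qed
  then show "red_adj_inv D A z \<in> red_adj_dom D A" "adj D A (red_adj_inv D A z) = z"
    "w \<in> red_adj_dom D A \<Longrightarrow> adj D A w = z \<Longrightarrow> red_adj_inv D A z = w"
    using theI'[OF ex1] the1_equality[OF ex1] unfolding red_adj_inv_def by blast+
qed

lemma norm_red_dom_le_preimage:
  assumes x: "x \<in> red_dom D A" and v: "v \<in> D" "A v = A x"
  shows "norm x \<le> norm v"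
proof -
  have "x - v \<in> ker_op D A"
    using x v A_diff subspace_diff[OF subspace_dom] unfolding red_dom_def ker_op_def by auto
  then have "inner (x - v) x = 0"
    using x unfolding red_dom_eq by (auto simp: orthogonal_comp_def orthogonal_def inner_commute)
  then have "norm x * norm x = inner v x"
    by (simp add: inner_diff_left power2_norm_eq_inner[symmetric] power2_eq_square)
  then have "norm x * norm x \<le> norm v * norm x" using norm_cauchy_schwarz[of v x] by simp
  then show ?thesis by (cases "norm x = 0") (auto simp: mult_le_cancel_right)
qed

lemma best_const_nonneg: "0 \<le> best_const D A"
  and norm_le_best_const: "x \<in> red_dom D A \<Longrightarrow> norm x \<le> best_const D A * norm (A x)"
proof -
  obtain C where C: "C \<ge> 0" "\<And>u. u \<in> ran_op D A \<Longrightarrow> \<exists>v\<in>D. A v = u \<and> norm v \<le> C * norm u"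
    using bounded_preimage by blast
  have "norm x \<le> C * norm (A x)" if x: "x \<in> red_dom D A" for x
  proof -
    have "A x \<in> ran_op D A" using x unfolding red_dom_def ran_op_def by blast
    then obtain v where "v \<in> D" "A v = A x" "norm v \<le> C * norm (A x)" using C(2) by blast
    then show ?thesis using norm_red_dom_le_preimage[OF x] by (meson order_trans)
  qed
  from Inf_best_constant[where f = norm and g = "\<lambda>x. norm (A x)", OF C(1) this]
  show "0 \<le> best_const D A" "x \<in> red_dom D A \<Longrightarrow> norm x \<le> best_const D A * norm (A x)"
    unfolding best_const_def by auto
qed

lemma norm_le_best_const_adj:
  assumes w: "w \<in> red_adj_dom D A"
  shows "norm w \<le> best_const D A * norm (adj D A w)"
proof -
  have w': "w \<in> adj_dom D A" "w \<in> ran_op D A" using w unfolding red_adj_dom_def by auto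
  have v: "red_inv D A w \<in> red_dom D A" "A (red_inv D A w) = w" using red_inv[OF w'(2)] by auto
  have "norm w * norm w = inner (A (red_inv D A w)) w"
    using v(2) by (simp add: power2_norm_eq_inner[symmetric] power2_eq_square)
  also have "\<dots> = inner (red_inv D A w) (adj D A w)"
    using inner_adj[OF w'(1)] v(1) unfolding red_dom_def by blast
  also have "\<dots> \<le> norm (red_inv D A w) * norm (adj D A w)" by (rule norm_cauchy_schwarz)
  also have "\<dots> \<le> (best_const D A * norm w) * norm (adj D A w)"
    using norm_le_best_const[OF v(1)] v(2) by (intro mult_right_mono) auto
  finally have "norm w * norm w \<le> norm w * (best_const D A * norm (adj D A w))"
    by (simp add: algebra_simps)
  then show ?thesis
    using best_const_nonneg by (cases "norm w = 0") (auto simp: mult_le_cancel_left)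
qed

lemma norm_oproj_ran_le:
  assumes x0: "x0 \<in> adj_dom D A" and z: "z \<in> adj_dom D A"
  shows "norm (oproj (ran_op D A) (x0 - t))
    \<le> best_const D A * norm (adj D A z - adj D A x0) + norm (z - t)"
proof -
  let ?P = "oproj (ran_op D A)"
  have "?P z - ?P x0 \<in> red_adj_dom D A" "adj D A (?P z - ?P x0) = adj D A z - adj D A x0"
    using adj_diff oproj_ran_in_adj_dom[OF x0] oproj_ran_in_adj_dom[OF z]
      subspace_diff[OF subspace_ran] oproj_in[OF subspace_closed_ran]
    unfolding red_adj_dom_def by auto
  then have "norm (?P z - ?P x0) \<le> best_const D A * norm (adj D A z - adj D A x0)"
    using norm_le_best_const_adj by metis
  then show ?thesis using norm_oproj_diff_le[OF subspace_closed_ran, of x0 t z] by linarith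
qed

lemma norm_oproj_ran_adj_le:
  assumes x0: "x0 \<in> D" and \<xi>: "\<xi> \<in> D"
  shows "norm (oproj ran_adj (x0 - t))
    \<le> best_const D A * norm (A \<xi> - A x0) + norm (\<xi> - t)"
proof -
  let ?P = "oproj ran_adj"
  have "?P \<xi> - ?P x0 \<in> red_dom D A" "A (?P \<xi> - ?P x0) = A \<xi> - A x0"
    using A_diff oproj_ran_adj_in_red_dom[OF x0] oproj_ran_adj_in_red_dom[OF \<xi>]
      subspace_diff[OF subspace_dom] subspace_diff[OF subspace_ran_adj]
    unfolding red_dom_def by auto
  then have "norm (?P \<xi> - ?P x0) \<le> best_const D A * norm (A \<xi> - A x0)"
    using norm_le_best_const by metis
  then show ?thesis using norm_oproj_diff_le[OF subspace_closed_ran_adj, of x0 t \<xi>] by linarith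
qed

lemma stmt_ii_holds:
  assumes x0: "x0 \<in> adj_dom D A" "adj D A x0 = g"
  shows "stmt_ii D A g t (oproj (ran_op D A) (x0 - t))"
proof -
  let ?P = "oproj (ran_op D A)"
  define e where "e = ?P (x0 - t)"
  have e: "e = ?P x0 - ?P t" "e \<in> ran_op D A"
    unfolding e_def by (rule oproj_diff[OF subspace_closed_ran] oproj_in[OF subspace_closed_ran])+
  have Px0: "?P x0 \<in> red_adj_dom D A" "adj D A (?P x0) = g"
    using oproj_ran_in_adj_dom[OF x0(1)] x0(2) oproj_in[OF subspace_closed_ran]
    unfolding red_adj_dom_def by auto
  have \<zeta>: "e + t \<in> adj_dom D A" "adj D A (e + t) = g"
    using oproj_ran_diff_add[OF x0(1)] x0(2) unfolding e_def by auto
  have \<phi>: "red_inv D A e \<in> D" "A (red_inv D A e) = e"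
    using red_inv[OF e(2)] unfolding red_dom_def by auto
  have dual: "2 * inner g p - inner (2 *\<^sub>R t + A p) (A p) = 2 * inner (A p) e - inner (A p) (A p)"
    if "p \<in> D" for p
    using inner_adj[OF \<zeta>(1) that] \<zeta>(2)
    by (simp add: inner_add_left inner_add_right inner_commute algebra_simps)
  show ?thesis
    unfolding stmt_ii_def Let_def e_def[symmetric]
  proof (intro conjI ballI)
    have "g \<in> ran_adj" using x0 unfolding ran_op_def by blast
    then show "e = red_adj_inv D A g - ?P t" using red_adj_inv_unique[OF _ Px0] e(1) by simp
    show "e + t \<in> adj_dom D A" "adj D A (e + t) = g" by (fact \<zeta>)+
    show "(best_const D A * norm (adj D A (e + t) - g) + norm (e + t - t))\<^sup>2
        \<le> (best_const D A * norm (adj D A z - g) + norm (z - t))\<^sup>2" if "z \<in> adj_dom D A" for z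
      using norm_oproj_ran_le[OF x0(1) that, of t] \<zeta>(2) x0(2) by (simp add: e_def power_mono)
    show "(norm e)\<^sup>2 = (best_const D A * norm (adj D A (e + t) - g) + norm (e + t - t))\<^sup>2"
      using \<zeta>(2) by simp
    show "red_inv D A e \<in> D" by (fact \<phi>)
  qed (use quadratic_maximum[where T = A, OF dual \<phi>] in blast)+
qed

lemma norm_oproj_ran_adj_le_second_order:
  assumes x: "x \<in> D" "A x \<in> adj_dom D A" and \<xi>: "\<xi> \<in> D" and z: "z \<in> adj_dom D A"
  shows "norm (oproj ran_adj (x - t))
    \<le> (best_const D A)\<^sup>2 * norm (adj D A z - adj D A (A x)) + best_const D A * norm (z - A \<xi>)
      + norm (\<xi> - t)"
proof -
  have "A x - A \<xi> \<in> ran_op D A"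
    using x(1) \<xi> A_diff subspace_diff[OF subspace_dom] unfolding ran_op_def by (metis image_eqI)
  then have "norm (A \<xi> - A x) \<le> best_const D A * norm (adj D A z - adj D A (A x)) + norm (z - A \<xi>)"
    using norm_oproj_ran_le[OF x(2) z, of "A \<xi>"] oproj_of_mem[OF subspace_closed_ran]
    by (simp add: norm_minus_commute)
  from mult_left_mono[OF this best_const_nonneg]
  have "best_const D A * norm (A \<xi> - A x)
      \<le> (best_const D A)\<^sup>2 * norm (adj D A z - adj D A (A x)) + best_const D A * norm (z - A \<xi>)"
    by (simp add: power2_eq_square algebra_simps)
  then show ?thesis using norm_oproj_ran_adj_le[OF x(1) \<xi>, of t] by linarith
qed

lemma stmt_iii_holds:
  assumes x: "x \<in> D" "A x \<in> adj_dom D A" "adj D A (A x) = f"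
  shows "stmt_iii D A f x t (oproj ran_adj (x - t))"
proof -
  let ?P = "oproj ran_adj" and ?c = "best_const D A"
  define e where "e = ?P (x - t)"
  have e: "e = ?P x - ?P t" "e \<in> ran_adj"
    unfolding e_def by (rule oproj_diff[OF subspace_closed_ran_adj] oproj_in[OF subspace_closed_ran_adj])+
  have \<xi>: "e + t \<in> D" "A (e + t) = A x"
    using oproj_ran_adj_diff_add[OF x(1)] unfolding e_def by auto
  have w: "red_adj_inv D A e \<in> ran_op D A" "red_adj_inv D A e \<in> adj_dom D A"
    "adj D A (red_adj_inv D A e) = e"
    using red_adj_inv(1,2)[OF e(2)] unfolding red_adj_dom_def by auto
  have \<phi>: "red_inv D A (red_adj_inv D A e) \<in> {\<xi> \<in> D. A \<xi> \<in> adj_dom D A}"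
    "adj D A (A (red_inv D A (red_adj_inv D A e))) = e"
    using red_inv[OF w(1)] w(2,3) unfolding red_dom_def by auto
  have dual: "2 * inner f p - inner (2 *\<^sub>R t + adj D A (A p)) (adj D A (A p))
      = 2 * inner (adj D A (A p)) e - inner (adj D A (A p)) (adj D A (A p))"
    if "p \<in> {\<xi> \<in> D. A \<xi> \<in> adj_dom D A}" for p
  proof -
    have "inner f p = inner x (adj D A (A p))"
      using that inner_adj[OF x(2)] inner_adj[of "A p" x] x by (simp add: inner_commute)
    moreover have "inner (x - t) (adj D A (A p)) = inner e (adj D A (A p))"
      unfolding e_def using that inner_oproj[OF subspace_closed_ran_adj] unfolding ran_op_def by simp
    ultimately show ?thesis by (simp add: inner_add_left inner_diff_left inner_commute algebra_simps)
  qed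
  show ?thesis
    unfolding stmt_iii_def Let_def e_def[symmetric]
  proof (intro conjI ballI)
    show "e = ?P x - ?P t" by (fact e(1))
    show "e + t \<in> {\<xi> \<in> D. A \<xi> \<in> adj_dom D A}" "A (e + t) = A x" "adj D A (A (e + t)) = f"
      using \<xi> x by auto
    show "A x \<in> adj_dom D A" "adj D A (A x) = f" by (fact x)+
    show "(?c\<^sup>2 * norm (adj D A (A x) - f) + ?c * norm (A x - A (e + t)) + norm (e + t - t))\<^sup>2
        \<le> (?c\<^sup>2 * norm (adj D A z - f) + ?c * norm (z - A \<xi>') + norm (\<xi>' - t))\<^sup>2"
      if "\<xi>' \<in> D" "z \<in> adj_dom D A" for \<xi>' z
      using norm_oproj_ran_adj_le_second_order[OF x(1,2) that, of t] \<xi>(2) x(3)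
      by (simp add: e_def power_mono)
    show "(norm e)\<^sup>2 = (?c\<^sup>2 * norm (adj D A (A x) - f) + ?c * norm (A x - A (e + t)) + norm (e + t - t))\<^sup>2"
      using \<xi>(2) x(3) by simp
    show "(?c\<^sup>2 * norm (adj D A (A (e + t)) - f) + norm (e + t - t))\<^sup>2
        \<le> (?c\<^sup>2 * norm (adj D A (A \<xi>') - f) + norm (\<xi>' - t))\<^sup>2"
      if "\<xi>' \<in> {\<xi> \<in> D. A \<xi> \<in> adj_dom D A}" for \<xi>'
      using norm_oproj_ran_adj_le_second_order[OF x(1,2), of \<xi>' "A \<xi>'" t] that \<xi>(2) x(3)
      by (simp add: e_def power_mono)
    show "(norm e)\<^sup>2 = (?c\<^sup>2 * norm (adj D A (A (e + t)) - f) + norm (e + t - t))\<^sup>2"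
      using \<xi>(2) x(3) by simp
    show "red_inv D A (red_adj_inv D A e) \<in> {\<xi> \<in> D. A \<xi> \<in> adj_dom D A}" by (fact \<phi>(1))
  qed (use quadratic_maximum[where T = "\<lambda>p. adj D A (A p)", OF dual \<phi>] in blast)+
qed

lemma stmt_v_holds:
  assumes x: "x \<in> D" "A x \<in> adj_dom D A" "adj D A (A x) = f"
    and h: "h = oproj (ran_op D A) (A x - t)"
  shows "let c = best_const D A;
           F = (\<lambda>\<zeta>. (c * norm (adj D A \<zeta> - f) + norm (\<zeta> - t))\<^sup>2);
           G = (\<lambda>\<phi>. 2 * inner f \<phi> - inner (2 *\<^sub>R t + A \<phi>) (A \<phi>));
           \<zeta>h = h + t;
           \<phi>h = red_inv D A h
       in h = A x - oproj (ran_op D A) t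
        \<and> \<zeta>h \<in> adj_dom D A \<and> adj D A \<zeta>h = f
        \<and> (\<forall>\<zeta>\<in>adj_dom D A. F \<zeta>h \<le> F \<zeta>) \<and> (norm h)\<^sup>2 = F \<zeta>h
        \<and> \<phi>h \<in> D \<and> (\<forall>\<phi>\<in>D. G \<phi> \<le> G \<phi>h) \<and> (norm h)\<^sup>2 = G \<phi>h"
proof -
  have "red_adj_inv D A f = A x"
    using x by (intro red_adj_inv_unique) (auto simp: red_adj_dom_def ran_op_def)
  then show ?thesis using stmt_ii_holds[OF x(2,3), of t] unfolding stmt_ii_def h by simp
qed

lemma stmt_vi_holds:
  assumes y0: "y0 \<in> ker_op D A" and h: "h = oproj ran_adj (y0 - t)"
  shows "let c = best_const D A;
           F1 = (\<lambda>\<xi>. (c * norm (A \<xi>) + norm (\<xi> - t))\<^sup>2);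
           F2 = (\<lambda>\<xi>. (norm (\<xi> - t))\<^sup>2);
           G = (\<lambda>\<psi>. - inner (2 *\<^sub>R t + adj D A \<psi>) (adj D A \<psi>));
           \<xi>h = h + t;
           \<psi>h = red_adj_inv D A h
       in h = - oproj ran_adj t
        \<and> \<xi>h \<in> ker_op D A
        \<and> (\<forall>\<xi>\<in>D. F1 \<xi>h \<le> F1 \<xi>) \<and> (norm h)\<^sup>2 = F1 \<xi>h
        \<and> (\<forall>\<xi>\<in>ker_op D A. F2 \<xi>h \<le> F2 \<xi>) \<and> (norm h)\<^sup>2 = F2 \<xi>h
        \<and> \<psi>h \<in> adj_dom D A \<and> (\<forall>\<psi>\<in>adj_dom D A. G \<psi> \<le> G \<psi>h) \<and> (norm h)\<^sup>2 = G \<psi>h"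
proof -
  let ?P = "oproj ran_adj" and ?c = "best_const D A"
  have y0': "y0 \<in> D" "A y0 = 0" using y0 unfolding ker_op_def by auto
  have "?P y0 = 0"
    using y0 unfolding ker_eq_orthogonal_comp_ran_adj
    by (intro oproj_eq_0[OF subspace_closed_ran_adj]) (simp add: orthogonal_comp_def orthogonal_def inner_commute)
  then have h': "h = - ?P t" unfolding h oproj_diff[OF subspace_closed_ran_adj] by simp
  have \<xi>: "h + t \<in> D" "A (h + t) = 0" using oproj_ran_adj_diff_add[OF y0'(1)] y0'(2) unfolding h by auto
  have bound: "norm h \<le> ?c * norm (A \<xi>') + norm (\<xi>' - t)" if "\<xi>' \<in> D" for \<xi>'
    using norm_oproj_ran_adj_le[OF y0'(1) that, of t] y0'(2) unfolding h by simp
  have h_ran: "h \<in> ran_adj" unfolding h by (rule oproj_in[OF subspace_closed_ran_adj])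
  have \<psi>: "red_adj_inv D A h \<in> adj_dom D A" "adj D A (red_adj_inv D A h) = h"
    using red_adj_inv(1,2)[OF h_ran] unfolding red_adj_dom_def by auto
  have dual: "- inner (2 *\<^sub>R t + adj D A p) (adj D A p) = 2 * inner (adj D A p) h - inner (adj D A p) (adj D A p)"
    if "p \<in> adj_dom D A" for p
  proof -
    have "inner t (adj D A p) = inner (?P t) (adj D A p)"
      using that inner_oproj[OF subspace_closed_ran_adj] unfolding ran_op_def by simp
    then show ?thesis unfolding h' by (simp add: inner_add_left inner_add_right inner_commute)
  qed
  show ?thesis
    unfolding Let_def
  proof (intro conjI ballI)
    show "h = - ?P t" "h + t \<in> ker_op D A" using h' \<xi> unfolding ker_op_def by auto
    show "(?c * norm (A (h + t)) + norm (h + t - t))\<^sup>2 \<le> (?c * norm (A \<xi>') + norm (\<xi>' - t))\<^sup>2"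
      if "\<xi>' \<in> D" for \<xi>' using bound[OF that] \<xi>(2) by (simp add: power_mono)
    show "(norm h)\<^sup>2 = (?c * norm (A (h + t)) + norm (h + t - t))\<^sup>2" using \<xi>(2) by simp
    show "(norm (h + t - t))\<^sup>2 \<le> (norm (\<xi>' - t))\<^sup>2" if "\<xi>' \<in> ker_op D A" for \<xi>'
      using bound[of \<xi>'] that unfolding ker_op_def by (simp add: power_mono)
    show "(norm h)\<^sup>2 = (norm (h + t - t))\<^sup>2" by simp
    show "red_adj_inv D A h \<in> adj_dom D A" by (fact \<psi>(1))
  qed (use quadratic_maximum[where T = "adj D A", OF dual \<psi>] in blast)+
qed

end

locale hilbert_complex = A: closed_range_operator DA A + B: closed_range_operator DB B
  for DA :: "'a::{real_inner,complete_space} set" and A :: "'a \<Rightarrow> 'b::{real_inner,complete_space}"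
    and DB :: "'b set" and B :: "'b \<Rightarrow> 'c::{real_inner,complete_space}" +
  assumes complex: "ran_op DA A \<subseteq> ker_op DB B"
begin

text \<open>\<open>harmonic\<close> is the space \<open>K\<close> of the paper, e.g. \<open>K\<^sub>2\<close> for \<open>A = A\<^sub>1\<close> and \<open>B = A\<^sub>2\<close>.\<close>

abbreviation harmonic :: "'b set"
  where "harmonic \<equiv> ker_op DB B \<inter> A.ker_adj"

lemma harmonic_eq: "harmonic = B.ran_adj\<^sup>\<bottom> \<inter> (ran_op DA A)\<^sup>\<bottom>"
  by (simp add: B.ker_eq_orthogonal_comp_ran_adj A.ker_adj_eq_orthogonal_comp_ran)

lemma subspace_closed_harmonic: "subspace harmonic" "closed harmonic"
  unfolding harmonic_eq
  by (simp_all add: subspace_inter subspace_orthogonal_comp closed_Int closed_orthogonal_comp)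

lemma orthogonal_ran_ran_adj:
  "s \<in> ran_op DA A \<Longrightarrow> s' \<in> B.ran_adj \<Longrightarrow> inner s s' = 0"
  using complex B.ker_eq_orthogonal_comp_ran_adj by (auto simp: orthogonal_comp_def orthogonal_def inner_commute)

lemma harmonic_orthogonal:
  assumes "k \<in> harmonic"
  shows "s \<in> ran_op DA A \<Longrightarrow> inner k s = 0"
    and "s \<in> B.ran_adj \<Longrightarrow> inner k s = 0"
  using assms unfolding harmonic_eq by (auto simp: orthogonal_comp_def orthogonal_def inner_commute)

lemma oproj_harmonic_eq:
  "oproj harmonic e = e - oproj (ran_op DA A) e - oproj B.ran_adj e"
proof (rule oproj_unique[OF subspace_closed_harmonic])
  let ?e1 = "oproj (ran_op DA A) e" and ?e2 = "oproj B.ran_adj e"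
  have e: "?e1 \<in> ran_op DA A" "?e2 \<in> B.ran_adj"
    by (simp_all add: oproj_in A.subspace_closed_ran B.subspace_closed_ran_adj)
  have "inner (e - ?e1 - ?e2) s = 0" if "s \<in> ran_op DA A" for s
    using oproj_orthogonal[OF A.subspace_closed_ran that, of e] orthogonal_ran_ran_adj[OF that e(2)]
    by (simp add: inner_diff_left inner_diff_right inner_commute)
  moreover have "inner (e - ?e1 - ?e2) s = 0" if "s \<in> B.ran_adj" for s
    using oproj_orthogonal[OF B.subspace_closed_ran_adj that, of e] orthogonal_ran_ran_adj[OF e(1) that]
    by (simp add: inner_diff_left)
  ultimately show "e - ?e1 - ?e2 \<in> harmonic"
    unfolding harmonic_eq by (auto simp: orthogonal_comp_def orthogonal_def inner_commute)
  fix k assume "k \<in> harmonic"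
  then have "inner k ?e1 = 0" "inner k ?e2 = 0" using harmonic_orthogonal e by blast+
  moreover have "e - (e - ?e1 - ?e2) = ?e1 + ?e2" by simp
  ultimately show "inner (e - (e - ?e1 - ?e2)) k = 0" by (simp add: inner_add_left inner_add_right inner_commute)
qed

lemma orthogonal_decomposition:
  fixes e :: 'b
  defines "e1 \<equiv> oproj (ran_op DA A) e" and "e0 \<equiv> oproj harmonic e"
    and "e2 \<equiv> oproj B.ran_adj e"
  shows "e = e1 + e0 + e2 \<and> e1 \<in> ran_op DA A \<and> e0 \<in> harmonic \<and> e2 \<in> B.ran_adj
    \<and> inner e1 e0 = 0 \<and> inner e1 e2 = 0 \<and> inner e0 e2 = 0
    \<and> (norm e)\<^sup>2 = (norm e1)\<^sup>2 + (norm e0)\<^sup>2 + (norm e2)\<^sup>2"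
proof -
  have mem: "e1 \<in> ran_op DA A" "e0 \<in> harmonic" "e2 \<in> B.ran_adj"
    unfolding e1_def e0_def e2_def
    by (rule oproj_in A.subspace_closed_ran B.subspace_closed_ran_adj subspace_closed_harmonic)+
  have "inner e0 e1 = 0" "inner e0 e2 = 0" using harmonic_orthogonal[OF mem(2)] mem(1,3) by blast+
  then have orth: "inner e1 e0 = 0" "inner e1 e2 = 0" "inner e0 e2 = 0"
    using orthogonal_ran_ran_adj[OF mem(1,3)] by (simp_all add: inner_commute)
  have sum: "e = e1 + e0 + e2" unfolding e0_def oproj_harmonic_eq e1_def e2_def by simp
  then have "inner e e = inner e1 e1 + inner e0 e0 + inner e2 e2"
    using orth by (simp add: inner_add_left inner_add_right inner_commute)
  then show ?thesis using sum mem orth by (simp add: power2_norm_eq_inner)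
qed

lemma oproj_harmonic_ran: "s \<in> ran_op DA A \<Longrightarrow> oproj harmonic s = 0"
  and oproj_harmonic_ran_adj: "s \<in> B.ran_adj \<Longrightarrow> oproj harmonic s = 0"
  using harmonic_orthogonal by (auto intro!: oproj_eq_0[OF subspace_closed_harmonic] simp: inner_commute)

lemma stmt_iv_holds:
  assumes k: "k \<in> harmonic" and x0: "oproj harmonic x0 = k" and e: "e = oproj harmonic (x0 - t)"
  shows "let \<phi>h = red_inv DA A (oproj (ran_op DA A) t);
           \<psi>h = red_adj_inv DB B (oproj B.ran_adj t);
           F = (\<lambda>\<phi> \<psi>. (norm (k - t + A \<phi> + adj DB B \<psi>))\<^sup>2);
           G = (\<lambda>\<theta>. inner (2 *\<^sub>R (k - t) - \<theta>) \<theta>)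
       in e = k - oproj harmonic t
        \<and> \<phi>h \<in> DA \<and> \<psi>h \<in> adj_dom DB B \<and> A \<phi>h + adj DB B \<psi>h = t - oproj harmonic t
        \<and> (\<forall>\<phi>\<in>DA. \<forall>\<psi>\<in>adj_dom DB B. F \<phi>h \<psi>h \<le> F \<phi> \<psi>) \<and> (norm e)\<^sup>2 = F \<phi>h \<psi>h
        \<and> e \<in> harmonic \<and> (\<forall>\<theta>\<in>harmonic. G \<theta> \<le> G e) \<and> (norm e)\<^sup>2 = G e"
proof -
  let ?K = "oproj harmonic" and ?R = "oproj (ran_op DA A)"
    and ?S = "oproj B.ran_adj"
  have e_eq: "e = k - ?K t" and e_k: "e = ?K (k - t)"
    unfolding e oproj_diff[OF subspace_closed_harmonic] x0 oproj_of_mem[OF subspace_closed_harmonic k]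
    by simp_all
  have e_mem: "e \<in> harmonic" unfolding e by (rule oproj_in[OF subspace_closed_harmonic])
  have \<phi>: "red_inv DA A (?R t) \<in> DA" "A (red_inv DA A (?R t)) = ?R t"
    using A.red_inv[OF oproj_in[OF A.subspace_closed_ran]] unfolding red_dom_def by auto
  have \<psi>: "red_adj_inv DB B (?S t) \<in> adj_dom DB B" "adj DB B (red_adj_inv DB B (?S t)) = ?S t"
    using B.red_adj_inv(1,2)[OF oproj_in[OF B.subspace_closed_ran_adj]] unfolding red_adj_dom_def by auto
  have sum: "A (red_inv DA A (?R t)) + adj DB B (red_adj_inv DB B (?S t)) = t - ?K t"
    unfolding \<phi>(2) \<psi>(2) oproj_harmonic_eq by simp
  have bound: "norm e \<le> norm (k - t + A \<phi>' + adj DB B \<psi>')" if "\<phi>' \<in> DA" "\<psi>' \<in> adj_dom DB B" for \<phi>' \<psi>'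
  proof -
    have "?K (A \<phi>') = 0" "?K (adj DB B \<psi>') = 0"
      using that oproj_harmonic_ran oproj_harmonic_ran_adj unfolding ran_op_def by blast+
    then have "?K (k - t + A \<phi>' + adj DB B \<psi>') = e"
      unfolding e_k oproj_add[OF subspace_closed_harmonic] by simp
    then show ?thesis using norm_oproj_le[OF subspace_closed_harmonic] by metis
  qed
  have dual: "inner (2 *\<^sub>R (k - t) - \<theta>) \<theta> = 2 * inner \<theta> e - inner \<theta> \<theta>" if "\<theta> \<in> harmonic" for \<theta>
    using inner_oproj[OF subspace_closed_harmonic that, of "k - t"]
    unfolding e_k[symmetric] by (simp add: inner_diff_left inner_diff_right inner_commute)
  show ?thesis
    unfolding Let_def
  proof (intro conjI ballI)
    show "e = k - ?K t" by (fact e_eq)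
    show "red_inv DA A (?R t) \<in> DA" "red_adj_inv DB B (?S t) \<in> adj_dom DB B" by (fact \<phi>(1) \<psi>(1))+
    show "A (red_inv DA A (?R t)) + adj DB B (red_adj_inv DB B (?S t)) = t - ?K t" by (fact sum)
    have Fh: "k - t + A (red_inv DA A (?R t)) + adj DB B (red_adj_inv DB B (?S t)) = e"
      using sum unfolding e_eq by (simp add: algebra_simps)
    show "(norm (k - t + A (red_inv DA A (?R t)) + adj DB B (red_adj_inv DB B (?S t))))\<^sup>2
        \<le> (norm (k - t + A \<phi>' + adj DB B \<psi>'))\<^sup>2" if "\<phi>' \<in> DA" "\<psi>' \<in> adj_dom DB B" for \<phi>' \<psi>'
      using bound[OF that] unfolding Fh by (simp add: power_mono)
    show "(norm e)\<^sup>2 = (norm (k - t + A (red_inv DA A (?R t)) + adj DB B (red_adj_inv DB B (?S t))))\<^sup>2"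
      unfolding Fh ..
    show "e \<in> harmonic" by (fact e_mem)
  qed (use quadratic_maximum[where T = "\<lambda>\<theta>. \<theta>", OF dual e_mem refl] in blast)+
qed

lemma stmt_vii_holds:
  assumes y0: "y0 \<in> ran_op DA A" and h: "h = oproj harmonic (y0 - t)"
  shows "let \<phi>h = red_inv DA A (oproj (ran_op DA A) t);
           \<psi>h = red_adj_inv DB B (oproj B.ran_adj t);
           F = (\<lambda>\<phi> \<psi>. (norm (- t + A \<phi> + adj DB B \<psi>))\<^sup>2);
           G = (\<lambda>\<theta>. - inner (2 *\<^sub>R t + \<theta>) \<theta>)
       in h = - oproj harmonic t
        \<and> \<phi>h \<in> DA \<and> \<psi>h \<in> adj_dom DB B \<and> A \<phi>h + adj DB B \<psi>h = t - oproj harmonic t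
        \<and> (\<forall>\<phi>\<in>DA. \<forall>\<psi>\<in>adj_dom DB B. F \<phi>h \<psi>h \<le> F \<phi> \<psi>) \<and> (norm h)\<^sup>2 = F \<phi>h \<psi>h
        \<and> h \<in> harmonic \<and> (\<forall>\<theta>\<in>harmonic. G \<theta> \<le> G h) \<and> (norm h)\<^sup>2 = G h"
proof -
  have "inner (2 *\<^sub>R (- t) - \<theta>) \<theta> = - inner (2 *\<^sub>R t + \<theta>) \<theta>" for \<theta>
    by (simp add: inner_diff_left inner_add_left)
  with stmt_iv_holds[OF subspace_0[OF subspace_closed_harmonic(1)] oproj_harmonic_ran[OF y0] h]
  show ?thesis unfolding diff_0 by simp
qed

lemma oproj_shift_by_harmonic:
  assumes k: "k \<in> harmonic" "oproj harmonic x0 = k"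
    and t: "t = k + tp" "\<And>u. u \<in> harmonic \<Longrightarrow> inner u tp = 0"
  shows "oproj harmonic (x0 - t) = 0"
    and "oproj (ran_op DA A) (x0 - t) = oproj (ran_op DA A) (x0 - tp)"
    and "oproj B.ran_adj (x0 - t) = oproj B.ran_adj (x0 - tp)"
proof -
  have "oproj harmonic t = k"
    using t by (intro oproj_unique[OF subspace_closed_harmonic k(1)]) (simp add: inner_commute)
  then show "oproj harmonic (x0 - t) = 0" using k(2) by (simp add: oproj_diff[OF subspace_closed_harmonic])
  have x0_t: "x0 - t = (x0 - tp) - k" using t(1) by simp
  have "oproj (ran_op DA A) k = 0" "oproj B.ran_adj k = 0"
    using harmonic_orthogonal[OF k(1)]
    by (auto intro!: oproj_eq_0 A.subspace_closed_ran B.subspace_closed_ran_adj)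
  then show "oproj (ran_op DA A) (x0 - t) = oproj (ran_op DA A) (x0 - tp)"
    "oproj B.ran_adj (x0 - t) = oproj B.ran_adj (x0 - tp)"
    unfolding x0_t by (simp_all add: oproj_diff A.subspace_closed_ran B.subspace_closed_ran_adj)
qed

end

theorem theorem4p7:
  fixes D0 :: "'h0::{real_inner,complete_space} set" and A0 :: "'h0 \<Rightarrow> 'h1::{real_inner,complete_space}"
    and D1 :: "'h1 set" and A1 :: "'h1 \<Rightarrow> 'h2::{real_inner,complete_space}"
    and D2 :: "'h2 set" and A2 :: "'h2 \<Rightarrow> 'h3::{real_inner,complete_space}"
    and D3 :: "'h3 set" and A3 :: "'h3 \<Rightarrow> 'h4::{real_inner,complete_space}"
    and f x xt :: 'h2 and g :: 'h1 and k :: 'h2 and yt :: 'h3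
  assumes op0: "closed_dd_op D0 A0" and op1: "closed_dd_op D1 A1"
    and op2: "closed_dd_op D2 A2" and op3: "closed_dd_op D3 A3"
    and cx0: "ran_op D0 A0 \<subseteq> ker_op D1 A1"
    and cx1: "ran_op D1 A1 \<subseteq> ker_op D2 A2"
    and cx2: "ran_op D2 A2 \<subseteq> ker_op D3 A3"
    and cl1: "closed (ran_op D1 A1)" and cl2: "closed (ran_op D2 A2)"
    and cl3: "closed (ran_op D3 A3)"
    and fdK2: "finite_dim_set (ker_op D2 A2 \<inter> ker_op (adj_dom D1 A1) (adj D1 A1))"
    and f: "f \<in> ran_op (adj_dom D2 A2) (adj D2 A2)"
    and g: "g \<in> ran_op (adj_dom D1 A1) (adj D1 A1)"
    and k: "k \<in> ker_op D2 A2 \<inter> ker_op (adj_dom D1 A1) (adj D1 A1)"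
    and xD: "x \<in> D2" "x \<in> adj_dom D1 A1" "A2 x \<in> adj_dom D2 A2"
    and xeq: "adj D2 A2 (A2 x) = f" "adj D1 A1 x = g"
      "oproj (ker_op D2 A2 \<inter> ker_op (adj_dom D1 A1) (adj D1 A1)) x = k"
  defines "K2 \<equiv> ker_op D2 A2 \<inter> ker_op (adj_dom D1 A1) (adj D1 A1)"
    and "K3 \<equiv> ker_op D3 A3 \<inter> ker_op (adj_dom D2 A2) (adj D2 A2)"
    and "RA1 \<equiv> ran_op D1 A1"
    and "RA2s \<equiv> ran_op (adj_dom D2 A2) (adj D2 A2)"
    and "RA2 \<equiv> ran_op D2 A2"
    and "RA3s \<equiv> ran_op (adj_dom D3 A3) (adj D3 A3)"
    and "y \<equiv> A2 x"
    and "e \<equiv> x - xt" and "h \<equiv> A2 x - yt"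
    and "eA1 \<equiv> oproj (ran_op D1 A1) (x - xt)"
    and "eA2s \<equiv> oproj (ran_op (adj_dom D2 A2) (adj D2 A2)) (x - xt)"
    and "eK2 \<equiv> oproj (ker_op D2 A2 \<inter> ker_op (adj_dom D1 A1) (adj D1 A1)) (x - xt)"
    and "hA2 \<equiv> oproj (ran_op D2 A2) (A2 x - yt)"
    and "hA3s \<equiv> oproj (ran_op (adj_dom D3 A3) (adj D3 A3)) (A2 x - yt)"
    and "hK3 \<equiv> oproj (ker_op D3 A3 \<inter> ker_op (adj_dom D2 A2) (adj D2 A2)) (A2 x - yt)"
  shows
   \<comment> \<open>(i)\<close>
   "(e = eA1 + eK2 + eA2s \<and> eA1 \<in> RA1 \<and> eK2 \<in> K2 \<and> eA2s \<in> RA2s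
      \<and> inner eA1 eK2 = 0 \<and> inner eA1 eA2s = 0 \<and> inner eK2 eA2s = 0
      \<and> (norm e)\<^sup>2 = (norm eA1)\<^sup>2 + (norm eK2)\<^sup>2 + (norm eA2s)\<^sup>2)
    \<and> (h = hA2 + hK3 + hA3s \<and> hA2 \<in> RA2 \<and> hK3 \<in> K3 \<and> hA3s \<in> RA3s
      \<and> inner hA2 hK3 = 0 \<and> inner hA2 hA3s = 0 \<and> inner hK3 hA3s = 0
      \<and> (norm h)\<^sup>2 = (norm hA2)\<^sup>2 + (norm hK3)\<^sup>2 + (norm hA3s)\<^sup>2)
   \<comment> \<open>(ii)\<close>
    \<and> stmt_ii D1 A1 g xt eA1
   \<comment> \<open>(iii)\<close>
    \<and> stmt_iii D2 A2 f x xt eA2s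
   \<comment> \<open>(iv)\<close>
    \<and> (let \<phi>h = red_inv D1 A1 (oproj RA1 xt);
           \<psi>h = red_adj_inv D2 A2 (oproj RA2s xt);
           F = (\<lambda>\<phi> \<psi>. (norm (k - xt + A1 \<phi> + adj D2 A2 \<psi>))\<^sup>2);
           G = (\<lambda>\<theta>. inner (2 *\<^sub>R (k - xt) - \<theta>) \<theta>)
       in eK2 = k - oproj K2 xt
        \<and> \<phi>h \<in> D1 \<and> \<psi>h \<in> adj_dom D2 A2 \<and> A1 \<phi>h + adj D2 A2 \<psi>h = xt - oproj K2 xt
        \<and> (\<forall>\<phi>\<in>D1. \<forall>\<psi>\<in>adj_dom D2 A2. F \<phi>h \<psi>h \<le> F \<phi> \<psi>) \<and> (norm eK2)\<^sup>2 = F \<phi>h \<psi>h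
        \<and> eK2 \<in> K2 \<and> (\<forall>\<theta>\<in>K2. G \<theta> \<le> G eK2) \<and> (norm eK2)\<^sup>2 = G eK2)
   \<comment> \<open>(v)\<close>
    \<and> (let c2 = best_const D2 A2;
           F = (\<lambda>\<zeta>. (c2 * norm (adj D2 A2 \<zeta> - f) + norm (\<zeta> - yt))\<^sup>2);
           G = (\<lambda>\<phi>. 2 * inner f \<phi> - inner (2 *\<^sub>R yt + A2 \<phi>) (A2 \<phi>));
           \<zeta>h = hA2 + yt;
           \<phi>h = red_inv D2 A2 hA2
       in hA2 = y - oproj RA2 yt
        \<and> \<zeta>h \<in> adj_dom D2 A2 \<and> adj D2 A2 \<zeta>h = f
        \<and> (\<forall>\<zeta>\<in>adj_dom D2 A2. F \<zeta>h \<le> F \<zeta>) \<and> (norm hA2)\<^sup>2 = F \<zeta>h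
        \<and> \<phi>h \<in> D2 \<and> (\<forall>\<phi>\<in>D2. G \<phi> \<le> G \<phi>h) \<and> (norm hA2)\<^sup>2 = G \<phi>h)
   \<comment> \<open>(vi)\<close>
    \<and> (let c3 = best_const D3 A3;
           F1 = (\<lambda>\<xi>. (c3 * norm (A3 \<xi>) + norm (\<xi> - yt))\<^sup>2);
           F2 = (\<lambda>\<xi>. (norm (\<xi> - yt))\<^sup>2);
           G = (\<lambda>\<psi>. - inner (2 *\<^sub>R yt + adj D3 A3 \<psi>) (adj D3 A3 \<psi>));
           \<xi>h = hA3s + yt;
           \<psi>h = red_adj_inv D3 A3 hA3s
       in hA3s = - oproj RA3s yt
        \<and> \<xi>h \<in> ker_op D3 A3
        \<and> (\<forall>\<xi>\<in>D3. F1 \<xi>h \<le> F1 \<xi>) \<and> (norm hA3s)\<^sup>2 = F1 \<xi>h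
        \<and> (\<forall>\<xi>\<in>ker_op D3 A3. F2 \<xi>h \<le> F2 \<xi>) \<and> (norm hA3s)\<^sup>2 = F2 \<xi>h
        \<and> \<psi>h \<in> adj_dom D3 A3 \<and> (\<forall>\<psi>\<in>adj_dom D3 A3. G \<psi> \<le> G \<psi>h) \<and> (norm hA3s)\<^sup>2 = G \<psi>h)
   \<comment> \<open>(vii)\<close>
    \<and> (let \<phi>h = red_inv D2 A2 (oproj RA2 yt);
           \<psi>h = red_adj_inv D3 A3 (oproj RA3s yt);
           F = (\<lambda>\<phi> \<psi>. (norm (- yt + A2 \<phi> + adj D3 A3 \<psi>))\<^sup>2);
           G = (\<lambda>\<theta>. - inner (2 *\<^sub>R yt + \<theta>) \<theta>)
       in hK3 = - oproj K3 yt
        \<and> \<phi>h \<in> D2 \<and> \<psi>h \<in> adj_dom D3 A3 \<and> A2 \<phi>h + adj D3 A3 \<psi>h = yt - oproj K3 yt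
        \<and> (\<forall>\<phi>\<in>D2. \<forall>\<psi>\<in>adj_dom D3 A3. F \<phi>h \<psi>h \<le> F \<phi> \<psi>) \<and> (norm hK3)\<^sup>2 = F \<phi>h \<psi>h
        \<and> hK3 \<in> K3 \<and> (\<forall>\<theta>\<in>K3. G \<theta> \<le> G hK3) \<and> (norm hK3)\<^sup>2 = G hK3)
   \<comment> \<open>final remarks\<close>
    \<and> (\<forall>xp. xt = k + xp \<and> (\<forall>u\<in>K2. inner u xp = 0) \<longrightarrow>
          eK2 = 0 \<and> stmt_ii D1 A1 g xp eA1 \<and> stmt_iii D2 A2 f x xp eA2s)
    \<and> ((\<forall>u\<in>K3. inner u yt = 0) \<longrightarrow> hK3 = 0)"
proof -
  interpret L1: closed_range_operator D1 A1 by unfold_locales (fact op1 cl1)+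
  interpret L2: closed_range_operator D2 A2 by unfold_locales (fact op2 cl2)+
  interpret L3: closed_range_operator D3 A3 by unfold_locales (fact op3 cl3)+
  interpret C12: hilbert_complex D1 A1 D2 A2 by unfold_locales (fact cx1)
  interpret C23: hilbert_complex D2 A2 D3 A3 by unfold_locales (fact cx2)
  have y: "A2 x \<in> ran_op D2 A2" "A2 x \<in> ker_op D3 A3" using xD(1) cx2 unfolding ran_op_def by auto
  have remark_x: "eK2 = 0 \<and> stmt_ii D1 A1 g xp eA1 \<and> stmt_iii D2 A2 f x xp eA2s"
    if "xt = k + xp \<and> (\<forall>u\<in>K2. inner u xp = 0)" for xp
    using C12.oproj_shift_by_harmonic[OF k xeq(3), of xt xp] that
      L1.stmt_ii_holds[OF xD(2) xeq(2)] L2.stmt_iii_holds[OF xD(1,3) xeq(1)]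
    unfolding eK2_def eA1_def eA2s_def K2_def by auto
  have remark_y: "hK3 = 0" if "\<forall>u\<in>K3. inner u yt = 0"
    using that C23.oproj_harmonic_ran[OF y(1)]
      oproj_eq_0[OF C23.subspace_closed_harmonic, of yt]
    unfolding hK3_def K3_def oproj_diff[OF C23.subspace_closed_harmonic] by (simp add: inner_commute)
  show ?thesis
    using C12.orthogonal_decomposition[of "x - xt"] C23.orthogonal_decomposition[of "A2 x - yt"]
      L1.stmt_ii_holds[OF xD(2) xeq(2)] L2.stmt_iii_holds[OF xD(1,3) xeq(1)]
      C12.stmt_iv_holds[OF k xeq(3) refl] L2.stmt_v_holds[OF xD(1,3) xeq(1) refl]
      L3.stmt_vi_holds[OF y(2) refl] C23.stmt_vii_holds[OF y(1) refl] remark_x remark_y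
    unfolding K2_def K3_def RA1_def RA2s_def RA2_def RA3s_def y_def e_def h_def
      eA1_def eA2s_def eK2_def hA2_def hA3s_def hK3_def
    by blast
qed

end
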